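(* Let $F$ be a Montel space, $t_0\in\mathbb R$, $\varepsilon>0$. (i) Assume $\mathbf F\in C([t_0,t_0+\varepsilon];F)$ (resp. $C([t_0-\varepsilon,t_0];F)$, resp. $C([t_0-\varepsilon,t_0+\varepsilon];F)$) and for each $f'\in F'$ the function $t\mapsto F_{f'}(t)=\langle f',\mathbf F(t)\rangle$ has a right derivative (resp. left derivative, resp. derivative) at $t_0$. Then $\mathbf F$ has a right derivative (resp. left derivative, resp. derivative) at $t_0$ in $F$, and it is the element of $F=(F'_b)'_b$ given by $f'\mapsto\frac{d^+}{dt}F_{f'}(t_0)$ (resp. $f'\mapsto\frac{d^-}{dt}F_{f'}(t_0)$, resp. $f'\mapsto\frac{d}{dt}F_{f'}(t_0)$). (ii) Let $E$ also be a Montel space. Assume $\mathbf Q\in C([t_0,t_0+\varepsilon];\mathcal L_b(E,F))$ (resp. $C([t_0-\varepsilon,t_0];\mathcal L_b(E,F))$, resp. $C([t_0-\varepsilon,t_0+\varepsilon];\mathcal L_b(E,F))$) and for each $e\in E$, $f'\in F'$ the function $t\mapsto F_{e,f'}(t)=\langle f',\mathbf Q(t)e\rangle$ has a right derivative (resp. left derivative, resp. derivative) at $t_0$. Then $\mathbf Q$ has a right derivative (resp. left derivative, resp. derivative) at $t_0$ in $\mathcal L_b(E,F)$, equal to the element of $\mathcal L(E,F)=\mathcal L(E,(F'_b)'_b)$ given by $e\mapsto(f'\mapsto\frac{d^+}{dt}F_{e,f'}(t_0))$ (resp. with $\frac{d^-}{dt}$, resp. $\frac{d}{dt}$).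
   Context: $F'_b$ denotes the strong dual; $\mathcal L_b(E,F)$ is the space of continuous linear maps $E\to F$ with the topology of uniform convergence on bounded sets. Montel spaces are reflexive, so $F=(F'_b)'_b$. *)

theory Defs
  imports "HOL-Analysis.Analysis"
begin

text \<open>Real topological vector spaces are modelled by types of sort
  real_vector and t2_space (Hausdorff); the class topology is the vector
  space topology.\<close>

definition tvs_space :: "'a::{real_vector,topological_space} itself \<Rightarrow> bool" where
  "tvs_space _ \<longleftrightarrow>
     continuous_on UNIV (\<lambda>p::'a \<times> 'a. fst p + snd p) \<and>
     continuous_on UNIV (\<lambda>p::real \<times> 'a. fst p *\<^sub>R snd p)"

definition locally_convex_space :: "'a::{real_vector,topological_space} itself \<Rightarrow> bool" where
  "locally_convex_space _ \<longleftrightarrow>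
     (\<forall>U::'a set. open U \<and> 0 \<in> U \<longrightarrow> (\<exists>V. open V \<and> 0 \<in> V \<and> convex V \<and> V \<subseteq> U))"

definition tvs_bounded :: "'a::{real_vector,topological_space} set \<Rightarrow> bool" where
  "tvs_bounded B \<longleftrightarrow>
     (\<forall>U. open U \<and> 0 \<in> U \<longrightarrow> (\<exists>s>0. \<forall>t. t > s \<longrightarrow> B \<subseteq> (\<lambda>x. t *\<^sub>R x) ` U))"

definition tvs_balanced :: "'a::real_vector set \<Rightarrow> bool" where
  "tvs_balanced A \<longleftrightarrow> (\<forall>x\<in>A. \<forall>c::real. \<bar>c\<bar> \<le> 1 \<longrightarrow> c *\<^sub>R x \<in> A)"

definition tvs_absorbing :: "'a::real_vector set \<Rightarrow> bool" where
  "tvs_absorbing A \<longleftrightarrow> (\<forall>x. \<exists>r>0. \<forall>c::real. \<bar>c\<bar> \<le> r \<longrightarrow> c *\<^sub>R x \<in> A)"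

definition tvs_barrel :: "'a::{real_vector,topological_space} set \<Rightarrow> bool" where
  "tvs_barrel A \<longleftrightarrow> closed A \<and> convex A \<and> tvs_balanced A \<and> tvs_absorbing A"

definition barrelled_space :: "'a::{real_vector,topological_space} itself \<Rightarrow> bool" where
  "barrelled_space _ \<longleftrightarrow> (\<forall>A::'a set. tvs_barrel A \<longrightarrow> 0 \<in> interior A)"

definition montel_space :: "'a::{real_vector,t2_space} itself \<Rightarrow> bool" where
  "montel_space T \<longleftrightarrow> tvs_space T \<and> locally_convex_space T \<and> barrelled_space T \<and>
     (\<forall>B::'a set. tvs_bounded B \<and> closed B \<longrightarrow> compact B)"

text \<open>Continuous linear maps, the space L(E,F); the dual F' is L(F,real).\<close>
definition cont_linear :: "('a::{real_vector,topological_space} \<Rightarrow> 'b::{real_vector,topological_space}) \<Rightarrow> bool" where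
  "cont_linear T \<longleftrightarrow> linear T \<and> continuous_on UNIV T"

text \<open>Convergence in L_b(E,F): uniformly on bounded subsets of E.\<close>
definition Lb_tendsto ::
  "('i \<Rightarrow> 'a::{real_vector,topological_space} \<Rightarrow> 'b::{real_vector,topological_space})
    \<Rightarrow> ('a \<Rightarrow> 'b) \<Rightarrow> 'i filter \<Rightarrow> bool" where
  "Lb_tendsto G L F \<longleftrightarrow>
     (\<forall>B. tvs_bounded B \<longrightarrow> (\<forall>U. open U \<and> 0 \<in> U \<longrightarrow>
        eventually (\<lambda>s. \<forall>e\<in>B. G s e - L e \<in> U) F))"

definition Lb_continuous_on ::
  "real set \<Rightarrow> (real \<Rightarrow> 'a::{real_vector,topological_space} \<Rightarrow> 'b::{real_vector,topological_space}) \<Rightarrow> bool" where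
  "Lb_continuous_on S Q \<longleftrightarrow>
     (\<forall>t\<in>S. cont_linear (Q t)) \<and> (\<forall>t\<in>S. Lb_tendsto Q (Q t) (at t within S))"

end

(*
  The difference quotients q t = (F t - F t0) /\<^sub>R (t - t0) are weakly bounded, because every
  continuous functional f makes f \<circ> F continuous on the compact interval and differentiable at t0.
  By Mackey's theorem (Baire category in the Banach dual of a continuous seminorm, with Hahn-Banach
  supplying norming functionals) they are bounded, so in the Montel space F their closure is
  compact.  Any two cluster points of q at t0 take the same value (f \<circ> F)'(t0) under every
  continuous functional f, and functionals separate points; a filter that is eventually in a
  compact set and has a unique cluster point converges.

  For operators, the pointwise limits exist by the first part.  The quotients are pointwise
  bounded, hence equicontinuous by Banach-Steinhaus in the barrelled space E; equicontinuity turns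
  pointwise convergence into uniform convergence on compact sets, i.e. (E being Montel) on bounded
  sets.
*)

theory Submission
  imports Defs
begin

section \<open>Seminorms and topological vector spaces\<close>

definition seminorm :: "('a::real_vector \<Rightarrow> real) \<Rightarrow> bool" where
  "seminorm p \<longleftrightarrow> (\<forall>x y. p (x + y) \<le> p x + p y) \<and> (\<forall>c x. p (c *\<^sub>R x) = \<bar>c\<bar> * p x)"

lemma seminorm_add: "seminorm p \<Longrightarrow> p (x + y) \<le> p x + p y"
  by (simp add: seminorm_def)

lemma seminorm_scaleR: "seminorm p \<Longrightarrow> p (c *\<^sub>R x) = \<bar>c\<bar> * p x"
  by (simp add: seminorm_def)

lemma seminorm_zero: "seminorm p \<Longrightarrow> p 0 = 0"
  using seminorm_scaleR[of p 0 0] by simp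

lemma seminorm_minus: "seminorm p \<Longrightarrow> p (- x) = p x"
  using seminorm_scaleR[of p "-1" x] by simp

lemma seminorm_nonneg: "seminorm p \<Longrightarrow> 0 \<le> p x"
  using seminorm_add[of p x "-x"] seminorm_minus[of p x] seminorm_zero[of p] by simp

lemma seminorm_abs_diff: "seminorm p \<Longrightarrow> \<bar>p x - p y\<bar> \<le> p (x - y)"
  using seminorm_add[of p "x - y" y] seminorm_add[of p "y - x" x] seminorm_minus[of p "x - y"]
  by (simp add: abs_le_iff)

lemma seminorm_le_if_unit_ball:
  assumes r: "seminorm r" and hom: "\<And>c x. g (c *\<^sub>R x) = \<bar>c\<bar> * g x"
    and ball: "\<And>x. r x < 1 \<Longrightarrow> g x \<le> 1"
  shows "g x \<le> r x"
proof (rule field_le_epsilon)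
  fix \<epsilon> :: real assume \<epsilon>: "\<epsilon> > 0"
  define s where "s = r x + \<epsilon>"
  have s: "s > 0" using \<epsilon> seminorm_nonneg[OF r, of x] by (simp add: s_def)
  have "r (inverse s *\<^sub>R x) = inverse s * r x" using seminorm_scaleR[OF r] s by simp
  also have "\<dots> < 1" using s \<epsilon> by (simp add: s_def field_simps)
  finally have "inverse s * g x \<le> 1" using ball hom s by fastforce
  then show "g x \<le> r x + \<epsilon>" using s by (simp add: s_def field_simps)
qed

lemma tvs_continuous_on_add:
  fixes f g :: "'b::topological_space \<Rightarrow> 'a::{real_vector,topological_space}"
  assumes T: "tvs_space TYPE('a)" and "continuous_on S f" "continuous_on S g"
  shows "continuous_on S (\<lambda>x. f x + g x)"
proof -
  have "continuous_on S ((\<lambda>p::'a\<times>'a. fst p + snd p) \<circ> (\<lambda>x. (f x, g x)))"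
    using T assms(2,3) unfolding tvs_space_def
    by (intro continuous_on_compose continuous_on_Pair) (auto intro: continuous_on_subset)
  then show ?thesis by (simp add: o_def)
qed

lemma tvs_continuous_on_scaleR:
  fixes f :: "'b::topological_space \<Rightarrow> real" and g :: "'b \<Rightarrow> 'a::{real_vector,topological_space}"
  assumes T: "tvs_space TYPE('a)" and "continuous_on S f" "continuous_on S g"
  shows "continuous_on S (\<lambda>x. f x *\<^sub>R g x)"
proof -
  have "continuous_on S ((\<lambda>p::real\<times>'a. fst p *\<^sub>R snd p) \<circ> (\<lambda>x. (f x, g x)))"
    using T assms(2,3) unfolding tvs_space_def
    by (intro continuous_on_compose continuous_on_Pair) (auto intro: continuous_on_subset)
  then show ?thesis by (simp add: o_def)
qed

lemma tvs_continuous_on_diff: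
  fixes f g :: "'b::topological_space \<Rightarrow> 'a::{real_vector,topological_space}"
  assumes T: "tvs_space TYPE('a)" and "continuous_on S f" "continuous_on S g"
  shows "continuous_on S (\<lambda>x. f x - g x)"
  using tvs_continuous_on_add[OF T assms(2) tvs_continuous_on_scaleR[OF T continuous_on_const assms(3)],
      of "-1"]
  by simp

lemma tvs_tendsto_add:
  fixes f g :: "'b \<Rightarrow> 'a::{real_vector,t2_space}"
  assumes T: "tvs_space TYPE('a)" and "(f \<longlongrightarrow> a) F" "(g \<longlongrightarrow> b) F"
  shows "((\<lambda>x. f x + g x) \<longlongrightarrow> a + b) F"
proof -
  have "isCont (\<lambda>p::'a\<times>'a. fst p + snd p) (a, b)"
    using T unfolding tvs_space_def by (simp add: continuous_on_eq_continuous_at)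
  from isCont_tendsto_compose[OF this tendsto_Pair[OF assms(2,3)]] show ?thesis by simp
qed

lemma tvs_tendsto_scaleR:
  fixes f :: "'b \<Rightarrow> real" and g :: "'b \<Rightarrow> 'a::{real_vector,t2_space}"
  assumes T: "tvs_space TYPE('a)" and "(f \<longlongrightarrow> a) F" "(g \<longlongrightarrow> b) F"
  shows "((\<lambda>x. f x *\<^sub>R g x) \<longlongrightarrow> a *\<^sub>R b) F"
proof -
  have "isCont (\<lambda>p::real\<times>'a. fst p *\<^sub>R snd p) (a, b)"
    using T unfolding tvs_space_def by (simp add: continuous_on_eq_continuous_at)
  from isCont_tendsto_compose[OF this tendsto_Pair[OF assms(2,3)]] show ?thesis by simp
qed

lemma open_Collect_continuous_on:
  assumes "continuous_on UNIV h" "open U"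
  shows "open {x. h x \<in> U}"
  using open_vimage[OF assms(2,1)] by (simp add: vimage_def)

lemma tvs_open_translate:
  fixes U :: "'a::{real_vector,topological_space} set"
  assumes T: "tvs_space TYPE('a)" and "open U"
  shows "open {x. x + y \<in> U}"
  by (rule open_Collect_continuous_on[OF tvs_continuous_on_add[OF T continuous_on_id continuous_on_const]
        assms(2)])

lemma tvs_real: "tvs_space TYPE(real)"
  unfolding tvs_space_def
  by (simp add: continuous_on_add continuous_on_mult continuous_on_fst continuous_on_snd continuous_on_id)

lemma tvs_continuous_on_linear_if_continuous_at_0:
  fixes f :: "'a::{real_vector,t2_space} \<Rightarrow> 'b::{real_vector,t2_space}"
  assumes Ta: "tvs_space TYPE('a)" and Tb: "tvs_space TYPE('b)" and lin: "linear f"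
    and at0: "\<And>V. open V \<Longrightarrow> 0 \<in> V \<Longrightarrow> \<exists>U. open U \<and> 0 \<in> U \<and> (\<forall>x\<in>U. f x \<in> V)"
  shows "continuous_on UNIV f"
proof (rule continuous_at_imp_continuous_on, intro ballI)
  fix y :: 'a
  show "isCont f y"
    unfolding isCont_def tendsto_def eventually_at_topological
  proof (intro allI impI)
    fix W assume W: "open W" "f y \<in> W"
    obtain U where U: "open U" "0 \<in> U" "\<forall>x\<in>U. f x + f y \<in> W"
      using at0[OF tvs_open_translate[OF Tb W(1)]] W(2) by auto
    have "open {x. x + - y \<in> U}" by (rule tvs_open_translate[OF Ta U(1)])
    moreover have "f x \<in> W" if "x + - y \<in> U" for x
    proof -
      have "f (x - y) + f y \<in> W" using U(3) that by simp
      then show ?thesis by (simp add: linear_diff[OF lin])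
    qed
    ultimately show "\<exists>S. open S \<and> y \<in> S \<and> (\<forall>x\<in>S. x \<noteq> y \<longrightarrow> x \<in> UNIV \<longrightarrow> f x \<in> W)"
      using U(2) by (intro exI[of _ "{x. x + - y \<in> U}"]) auto
  qed
qed

section \<open>The Minkowski functional\<close>

definition minkowski_functional :: "'a::real_vector set \<Rightarrow> 'a \<Rightarrow> real" where
  "minkowski_functional W x = Inf {r. 0 < r \<and> inverse r *\<^sub>R x \<in> W}"

lemma absorbing_zero:
  assumes "tvs_absorbing W"
  shows "0 \<in> W"
proof -
  obtain r :: real where "r > 0" "\<forall>c. \<bar>c\<bar> \<le> r \<longrightarrow> c *\<^sub>R 0 \<in> W"
    using assms unfolding tvs_absorbing_def by blast
  then show ?thesis by (metis abs_zero less_imp_le scaleR_zero_right)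
qed

lemma convex_scaleR_mem:
  assumes "convex W" "0 \<in> W" "x \<in> W" "0 \<le> c" "c \<le> 1"
  shows "c *\<^sub>R x \<in> W"
  using convexD[OF assms(1,3,2), of c "1 - c"] assms(4,5) by simp

lemma minkowski_functional_le:
  assumes "0 < r" "inverse r *\<^sub>R x \<in> W"
  shows "minkowski_functional W x \<le> r"
  unfolding minkowski_functional_def using assms by (intro cInf_lower bdd_belowI[of _ 0]) auto

lemma minkowski_functional_nonempty:
  assumes "tvs_absorbing W"
  shows "{r. 0 < r \<and> inverse r *\<^sub>R x \<in> W} \<noteq> {}"
proof -
  obtain r where "r > 0" "\<forall>c. \<bar>c\<bar> \<le> r \<longrightarrow> c *\<^sub>R x \<in> W"
    using assms unfolding tvs_absorbing_def by blast
  then have "r > 0" "r *\<^sub>R x \<in> W" by auto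
  then have "inverse r \<in> {r. 0 < r \<and> inverse r *\<^sub>R x \<in> W}" by simp
  then show ?thesis by blast
qed

lemma minkowski_functional_nonneg:
  assumes "tvs_absorbing W"
  shows "0 \<le> minkowski_functional W x"
  unfolding minkowski_functional_def
  by (rule cInf_greatest[OF minkowski_functional_nonempty[OF assms]]) auto

lemma minkowski_functional_less_imp_mem:
  assumes W: "convex W" "tvs_absorbing W" and less: "minkowski_functional W x < r"
  shows "inverse r *\<^sub>R x \<in> W"
proof -
  have "Inf {r. 0 < r \<and> inverse r *\<^sub>R x \<in> W} < r"
    using less unfolding minkowski_functional_def .
  from cInf_lessD[OF minkowski_functional_nonempty[OF W(2)] this]
  obtain r0 where r0: "0 < r0" "inverse r0 *\<^sub>R x \<in> W" "r0 < r" by blast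
  have "(r0 / r) *\<^sub>R (inverse r0 *\<^sub>R x) \<in> W"
    using r0 by (intro convex_scaleR_mem[OF W(1) absorbing_zero[OF W(2)] r0(2)]) auto
  moreover have "(r0 / r) *\<^sub>R (inverse r0 *\<^sub>R x) = inverse r *\<^sub>R x" using r0 by (simp add: inverse_eq_divide)
  ultimately show ?thesis by metis
qed

lemma minkowski_functional_mem:
  assumes "convex W" "tvs_absorbing W" "\<epsilon> > 0"
  shows "inverse (minkowski_functional W x + \<epsilon>) *\<^sub>R x \<in> W"
  using minkowski_functional_less_imp_mem[OF assms(1,2)] assms(3) by simp

lemma minkowski_functional_add:
  assumes W: "convex W" "tvs_absorbing W"
  shows "minkowski_functional W (x + y) \<le> minkowski_functional W x + minkowski_functional W y"
proof (rule field_le_epsilon)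
  let ?p = "minkowski_functional W"
  fix \<epsilon> :: real assume \<epsilon>: "\<epsilon> > 0"
  define a b where "a = ?p x + \<epsilon>/2" and "b = ?p y + \<epsilon>/2"
  have ab: "a > 0" "b > 0"
    using minkowski_functional_nonneg[OF W(2)] \<epsilon> by (auto simp: a_def b_def intro: add_nonneg_pos)
  have "(a / (a + b)) *\<^sub>R (inverse a *\<^sub>R x) + (b / (a + b)) *\<^sub>R (inverse b *\<^sub>R y) \<in> W"
    using minkowski_functional_mem[OF W, of "\<epsilon>/2"] \<epsilon> ab
    by (intro convexD[OF W(1)]) (auto simp: a_def b_def add_divide_distrib[symmetric])
  also have "(a / (a + b)) *\<^sub>R (inverse a *\<^sub>R x) + (b / (a + b)) *\<^sub>R (inverse b *\<^sub>R y)
      = inverse (a + b) *\<^sub>R (x + y)"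
    using ab by (simp add: field_simps scaleR_add_right)
  finally have "?p (x + y) \<le> a + b" using ab by (intro minkowski_functional_le) auto
  then show "?p (x + y) \<le> ?p x + ?p y + \<epsilon>" by (simp add: a_def b_def)
qed

lemma minkowski_functional_scaleR_le:
  assumes W: "convex W" "tvs_balanced W" "tvs_absorbing W" and c: "c \<noteq> 0"
  shows "minkowski_functional W (c *\<^sub>R x) \<le> \<bar>c\<bar> * minkowski_functional W x"
proof (rule field_le_epsilon)
  let ?p = "minkowski_functional W"
  fix \<epsilon> :: real assume \<epsilon>: "\<epsilon> > 0"
  define r where "r = ?p x + \<epsilon> / \<bar>c\<bar>"
  have r: "r > 0" using minkowski_functional_nonneg[OF W(3), of x] \<epsilon> c by (simp add: r_def add_nonneg_pos)
  have "inverse r *\<^sub>R x \<in> W" using minkowski_functional_mem[OF W(1,3), of "\<epsilon> / \<bar>c\<bar>" x] \<epsilon> c by (simp add: r_def)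
  moreover have "\<bar>sgn c\<bar> \<le> 1" by (simp add: abs_sgn_eq)
  ultimately have "sgn c *\<^sub>R (inverse r *\<^sub>R x) \<in> W"
    using W(2) unfolding tvs_balanced_def by blast
  also have "sgn c *\<^sub>R (inverse r *\<^sub>R x) = inverse (\<bar>c\<bar> * r) *\<^sub>R (c *\<^sub>R x)"
    using c r by (simp add: sgn_if field_simps)
  finally have "?p (c *\<^sub>R x) \<le> \<bar>c\<bar> * r" using r c by (intro minkowski_functional_le) auto
  also have "\<bar>c\<bar> * r = \<bar>c\<bar> * ?p x + \<epsilon>" using c by (simp add: r_def algebra_simps)
  finally show "?p (c *\<^sub>R x) \<le> \<bar>c\<bar> * ?p x + \<epsilon>" .
qed

lemma seminorm_minkowski_functional:
  assumes W: "convex W" "tvs_balanced W" "tvs_absorbing W"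
  shows "seminorm (minkowski_functional W)"
proof -
  let ?p = "minkowski_functional W"
  have "?p 0 \<le> 0 + \<epsilon>" if "\<epsilon> > 0" for \<epsilon>
    using minkowski_functional_le[of \<epsilon> 0 W] absorbing_zero[OF W(3)] that by simp
  then have "?p 0 \<le> 0" by (rule field_le_epsilon)
  then have zero: "?p 0 = 0" using minkowski_functional_nonneg[OF W(3), of 0] by simp
  have "?p (c *\<^sub>R x) = \<bar>c\<bar> * ?p x" for c x
  proof (cases "c = 0")
    case False
    have "?p x \<le> \<bar>inverse c\<bar> * ?p (c *\<^sub>R x)"
      using minkowski_functional_scaleR_le[OF W, of "inverse c" "c *\<^sub>R x"] False by simp
    then have "\<bar>c\<bar> * ?p x \<le> ?p (c *\<^sub>R x)" using False by (simp add: field_simps abs_inverse)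
    then show ?thesis using minkowski_functional_scaleR_le[OF W False, of x] by simp
  qed (simp add: zero)
  then show ?thesis unfolding seminorm_def using minkowski_functional_add[OF W(1,3)] by blast
qed

lemma tvs_open_absorbing:
  fixes W :: "'a::{real_vector,topological_space} set"
  assumes T: "tvs_space TYPE('a)" and W: "open W" "0 \<in> W"
  shows "tvs_absorbing W"
  unfolding tvs_absorbing_def
proof
  fix x :: 'a
  have "open {c::real. c *\<^sub>R x \<in> W}"
    by (rule open_Collect_continuous_on[OF tvs_continuous_on_scaleR[OF T continuous_on_id
          continuous_on_const] W(1)])
  moreover have "(0::real) \<in> {c. c *\<^sub>R x \<in> W}" using W(2) by simp
  ultimately obtain e where e: "e > 0" "ball (0::real) e \<subseteq> {c. c *\<^sub>R x \<in> W}"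
    using open_contains_ball by blast
  then show "\<exists>r>0. \<forall>c. \<bar>c\<bar> \<le> r \<longrightarrow> c *\<^sub>R x \<in> W"
    by (intro exI[of _ "e/2"]) (auto simp: subset_iff dist_real_def)
qed

lemma tvs_minkowski_functional_less_one:
  fixes W :: "'a::{real_vector,topological_space} set"
  assumes T: "tvs_space TYPE('a)" and W: "open W" and x: "x \<in> W"
  shows "minkowski_functional W x < 1"
proof -
  have "open {c::real. c *\<^sub>R x \<in> W}"
    by (rule open_Collect_continuous_on[OF tvs_continuous_on_scaleR[OF T continuous_on_id
          continuous_on_const] W])
  moreover have "(1::real) \<in> {c. c *\<^sub>R x \<in> W}" using x by simp
  ultimately obtain d where d: "d > 0" "ball (1::real) d \<subseteq> {c. c *\<^sub>R x \<in> W}"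
    using open_contains_ball by blast
  then have "(1 + d/2) *\<^sub>R x \<in> W" by (auto simp: subset_iff dist_real_def)
  then have "minkowski_functional W x \<le> inverse (1 + d/2)"
    using d by (intro minkowski_functional_le) auto
  also have "\<dots> < 1" using d by (simp add: field_simps)
  finally show ?thesis .
qed

lemma tvs_continuous_on_minkowski_functional:
  fixes W :: "'a::{real_vector,t2_space} set"
  assumes T: "tvs_space TYPE('a)" and W: "open W" "0 \<in> W" "convex W" "tvs_balanced W"
  shows "continuous_on UNIV (minkowski_functional W)"
proof (rule continuous_at_imp_continuous_on, intro ballI)
  let ?p = "minkowski_functional W"
  have abs: "tvs_absorbing W" by (rule tvs_open_absorbing[OF T W(1,2)])
  have sn: "seminorm ?p" by (rule seminorm_minkowski_functional[OF W(3,4) abs])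
  fix y :: 'a
  show "isCont ?p y"
    unfolding isCont_def tendsto_iff eventually_at_topological
  proof (intro allI impI)
    fix \<epsilon> :: real assume \<epsilon>: "\<epsilon> > 0"
    let ?N = "{x. inverse \<epsilon> *\<^sub>R (x - y) \<in> W}"
    have "open ?N"
      by (intro open_Collect_continuous_on[OF _ W(1)] tvs_continuous_on_scaleR[OF T continuous_on_const]
          tvs_continuous_on_diff[OF T continuous_on_id continuous_on_const])
    moreover have "dist (?p x) (?p y) < \<epsilon>" if "x \<in> ?N" for x
    proof -
      have "?p (x - y) = \<epsilon> * ?p (inverse \<epsilon> *\<^sub>R (x - y))"
        using \<epsilon> seminorm_scaleR[OF sn, of "inverse \<epsilon>" "x - y"] by simp
      also have "\<dots> < \<epsilon>" using tvs_minkowski_functional_less_one[OF T W(1)] that \<epsilon> by simp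
      finally show ?thesis using seminorm_abs_diff[OF sn, of x y] by (simp add: dist_real_def)
    qed
    ultimately show "\<exists>S. open S \<and> y \<in> S \<and> (\<forall>x\<in>S. x \<noteq> y \<longrightarrow> x \<in> UNIV \<longrightarrow> dist (?p x) (?p y) < \<epsilon>)"
      using W(2) by (intro exI[of _ ?N]) auto
  qed
qed

lemma locally_convex_balanced_nhds:
  fixes U :: "'a::{real_vector,topological_space} set"
  assumes T: "tvs_space TYPE('a)" and LC: "locally_convex_space TYPE('a)" and U: "open U" "0 \<in> U"
  obtains W where "open W" "0 \<in> W" "convex W" "tvs_balanced W" "W \<subseteq> U"
proof -
  obtain V where V: "open V" "0 \<in> V" "convex V" "V \<subseteq> U"
    using LC U unfolding locally_convex_space_def by blast
  define W where "W = V \<inter> {x. - x \<in> V}"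
  have "open {x. - x \<in> V}"
    using open_Collect_continuous_on[OF tvs_continuous_on_scaleR[OF T continuous_on_const continuous_on_id]
        V(1), of "-1"] by simp
  then have "open W" using V(1) by (simp add: W_def open_Int)
  moreover have W0: "0 \<in> W" using V by (simp add: W_def)
  moreover have "{x. - x \<in> V} = uminus ` V" by force
  then have conv: "convex W" using convex_negations[OF V(3)] V(3) by (simp add: W_def convex_Int)
  moreover have "tvs_balanced W" unfolding tvs_balanced_def
  proof (intro ballI allI impI)
    fix x and c :: real assume x: "x \<in> W" and c: "\<bar>c\<bar> \<le> 1"
    have "- x \<in> W" using x by (simp add: W_def)
    then have "\<bar>c\<bar> *\<^sub>R x \<in> W" "\<bar>c\<bar> *\<^sub>R (- x) \<in> W"
      using convex_scaleR_mem[OF conv W0 x] convex_scaleR_mem[OF conv W0 \<open>- x \<in> W\<close>] c by auto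
    moreover have "c *\<^sub>R x = \<bar>c\<bar> *\<^sub>R x \<or> c *\<^sub>R x = \<bar>c\<bar> *\<^sub>R (- x)" by (cases "c \<ge> 0") auto
    ultimately show "c *\<^sub>R x \<in> W" by metis
  qed
  moreover have "W \<subseteq> U" using V(4) by (auto simp: W_def)
  ultimately show ?thesis using that by blast
qed

lemma continuous_seminorm_in_nhds:
  fixes U :: "'a::{real_vector,t2_space} set"
  assumes T: "tvs_space TYPE('a)" and LC: "locally_convex_space TYPE('a)" and U: "open U" "0 \<in> U"
  obtains p where "seminorm p" "continuous_on UNIV p" "{x. p x < 1} \<subseteq> U"
proof -
  obtain W where W: "open W" "0 \<in> W" "convex W" "tvs_balanced W" "W \<subseteq> U"
    using locally_convex_balanced_nhds[OF T LC U] .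
  have abs: "tvs_absorbing W" by (rule tvs_open_absorbing[OF T W(1,2)])
  have "{x. minkowski_functional W x < 1} \<subseteq> W"
    using minkowski_functional_less_imp_mem[OF W(3) abs, of _ 1] by auto
  then show ?thesis
    using that seminorm_minkowski_functional[OF W(3,4) abs]
      tvs_continuous_on_minkowski_functional[OF T W(1-4)] W(5) by blast
qed

lemma tvs_open_seminorm_ball:
  fixes p :: "'a::{real_vector,topological_space} \<Rightarrow> real"
  assumes T: "tvs_space TYPE('a)" and "continuous_on UNIV p"
  shows "open {x. p (x - y) < e}"
proof -
  have "continuous_on UNIV (\<lambda>x. p (x - y))"
    by (rule continuous_on_compose2[OF assms(2) tvs_continuous_on_diff[OF T continuous_on_id
            continuous_on_const]]) auto
  then show ?thesis using open_Collect_continuous_on[of "\<lambda>x. p (x - y)" "{..<e}"] by auto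
qed

section \<open>The Hahn-Banach theorem\<close>

text \<open>A linear functional on a subspace, represented by its graph so that extensions are ordered
  by inclusion (for Zorn's lemma).\<close>

definition dominated_linear_graph :: "('a::real_vector \<Rightarrow> real) \<Rightarrow> ('a \<times> real) set \<Rightarrow> bool" where
  "dominated_linear_graph p G \<longleftrightarrow>
     (\<forall>x a b. (x, a) \<in> G \<longrightarrow> (x, b) \<in> G \<longrightarrow> a = b) \<and>
     (\<forall>x y a b. (x, a) \<in> G \<longrightarrow> (y, b) \<in> G \<longrightarrow> (x + y, a + b) \<in> G) \<and>
     (\<forall>x a c. (x, a) \<in> G \<longrightarrow> (c *\<^sub>R x, c * a) \<in> G) \<and>
     (\<forall>x a. (x, a) \<in> G \<longrightarrow> a \<le> p x)"

lemma dominated_linear_graphD: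
  assumes "dominated_linear_graph p G"
  shows "(x, a) \<in> G \<Longrightarrow> (x, b) \<in> G \<Longrightarrow> a = b"
    and "(x, a) \<in> G \<Longrightarrow> (y, b) \<in> G \<Longrightarrow> (x + y, a + b) \<in> G"
    and "(x, a) \<in> G \<Longrightarrow> (c *\<^sub>R x, c * a) \<in> G"
    and "(x, a) \<in> G \<Longrightarrow> a \<le> p x"
  using assms unfolding dominated_linear_graph_def by blast+

lemma dominated_linear_graph_extension_value:
  assumes sn: "seminorm p" and G: "dominated_linear_graph p G" and "(z, b) \<in> G"
  obtains c where "\<And>h a. (h, a) \<in> G \<Longrightarrow> a - p (h - v) \<le> c"
    and "\<And>h a. (h, a) \<in> G \<Longrightarrow> c \<le> p (h + v) - a"
proof -
  have zero: "(0, 0) \<in> G" using dominated_linear_graphD(3)[OF G assms(3), of 0] by simp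
  define S where "S = {a - p (h - v) | h a. (h, a) \<in> G}"
  have key: "a - p (h - v) \<le> p (h' + v) - a'" if "(h, a) \<in> G" "(h', a') \<in> G" for h a h' a'
  proof -
    have "a + a' \<le> p ((h - v) + (h' + v))"
      using dominated_linear_graphD(4)[OF G dominated_linear_graphD(2)[OF G that]] by simp
    also have "\<dots> \<le> p (h - v) + p (h' + v)" by (rule seminorm_add[OF sn])
    finally show ?thesis by simp
  qed
  have "S \<noteq> {}" using zero unfolding S_def by blast
  moreover have "bdd_above S" unfolding S_def using key[OF _ zero]
    by (intro bdd_aboveI[of _ "p (0 + v) - 0"]) auto
  ultimately show ?thesis using key
    by (intro that[of "Sup S"] cSup_upper cSup_least) (auto simp: S_def)
qed

lemma dominated_linear_graph_extension_dominated:
  assumes sn: "seminorm p" and G: "dominated_linear_graph p G" and h: "(h, a) \<in> G"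
    and lower: "\<And>h a. (h, a) \<in> G \<Longrightarrow> a - p (h - v) \<le> c"
    and upper: "\<And>h a. (h, a) \<in> G \<Longrightarrow> c \<le> p (h + v) - a"
  shows "a + t * c \<le> p (h + t *\<^sub>R v)"
proof (cases "t > 0")
  case True
  have "c \<le> p (inverse t *\<^sub>R h + v) - inverse t * a"
    by (rule upper[OF dominated_linear_graphD(3)[OF G h]])
  then have "a + t * c \<le> t * p (inverse t *\<^sub>R h + v)" using True by (simp add: field_simps)
  also have "\<dots> = p (t *\<^sub>R (inverse t *\<^sub>R h + v))" using seminorm_scaleR[OF sn] True by simp
  also have "t *\<^sub>R (inverse t *\<^sub>R h + v) = h + t *\<^sub>R v" using True by (simp add: scaleR_add_right)
  finally show ?thesis .
next
  case False
  show ?thesis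
  proof (cases "t = 0")
    case True then show ?thesis using dominated_linear_graphD(4)[OF G h] by simp
  next
    case neg: False
    with False have t: "- t > 0" by simp
    have "inverse (- t) * a - p (inverse (- t) *\<^sub>R h - v) \<le> c"
      by (rule lower[OF dominated_linear_graphD(3)[OF G h]])
    then have "a + t * c \<le> (- t) * p (inverse (- t) *\<^sub>R h - v)" using t by (simp add: field_simps)
    also have "\<dots> = p (h + t *\<^sub>R v)"
      using seminorm_scaleR[OF sn, of "- t" "inverse (- t) *\<^sub>R h - v"] t
      by (simp add: algebra_simps)
    finally show ?thesis .
  qed
qed

lemma dominated_linear_graph_coefficient_unique:
  assumes G: "dominated_linear_graph p G" and v: "\<And>a. (v, a) \<notin> G"
    and "(h1, a1) \<in> G" "(h2, a2) \<in> G" "h1 + t1 *\<^sub>R v = h2 + t2 *\<^sub>R v"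
  shows "t1 = t2"
proof (rule ccontr)
  assume ne: "t1 \<noteq> t2"
  have "(t2 - t1) *\<^sub>R v = h1 + (-1) *\<^sub>R h2" using assms(5) by (simp add: algebra_simps)
  then have "v = inverse (t2 - t1) *\<^sub>R (h1 + (-1) *\<^sub>R h2)"
    using ne by (metis scaleR_scaleR left_inverse right_minus_eq scaleR_one)
  moreover have "(inverse (t2 - t1) *\<^sub>R (h1 + (-1) *\<^sub>R h2), inverse (t2 - t1) * (a1 + (-1) * a2)) \<in> G"
    using dominated_linear_graphD(2,3)[OF G] assms(3,4) by blast
  ultimately show False using v by metis
qed

lemma dominated_linear_graph_extension:
  assumes sn: "seminorm p" and G: "dominated_linear_graph p G" and v: "\<And>a. (v, a) \<notin> G"
    and lower: "\<And>h a. (h, a) \<in> G \<Longrightarrow> a - p (h - v) \<le> c"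
    and upper: "\<And>h a. (h, a) \<in> G \<Longrightarrow> c \<le> p (h + v) - a"
  shows "dominated_linear_graph p {(h + t *\<^sub>R v, a + t * c) | h a t. (h, a) \<in> G}"
    (is "dominated_linear_graph p ?G'")
  unfolding dominated_linear_graph_def
proof (intro conjI allI impI)
  have inG': "(h + t *\<^sub>R v, a + t * c) \<in> ?G'" if "(h, a) \<in> G" for h a t
    using that by blast
  {
    fix x a b assume "(x, a) \<in> ?G'" "(x, b) \<in> ?G'"
    then obtain h1 a1 t1 h2 a2 t2 where "(h1, a1) \<in> G" "x = h1 + t1 *\<^sub>R v" "a = a1 + t1 * c"
      and "(h2, a2) \<in> G" "x = h2 + t2 *\<^sub>R v" "b = a2 + t2 * c" by blast
    then show "a = b"
      using dominated_linear_graph_coefficient_unique[OF G v] dominated_linear_graphD(1)[OF G]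
      by (metis add_right_cancel)
  next
    fix x y a b assume "(x, a) \<in> ?G'" "(y, b) \<in> ?G'"
    then obtain h1 a1 t1 h2 a2 t2 where "(h1, a1) \<in> G" "x = h1 + t1 *\<^sub>R v" "a = a1 + t1 * c"
      and "(h2, a2) \<in> G" "y = h2 + t2 *\<^sub>R v" "b = a2 + t2 * c" by blast
    then show "(x + y, a + b) \<in> ?G'"
      using inG'[OF dominated_linear_graphD(2)[OF G], of h1 a1 h2 a2 "t1 + t2"]
      by (simp add: algebra_simps)
  next
    fix x a and d :: real assume "(x, a) \<in> ?G'"
    then obtain h a' t where "(h, a') \<in> G" "x = h + t *\<^sub>R v" "a = a' + t * c" by blast
    then show "(d *\<^sub>R x, d * a) \<in> ?G'"
      using inG'[OF dominated_linear_graphD(3)[OF G], of h a' d "d * t"]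
      by (simp add: algebra_simps)
  }
next
  fix x a assume "(x, a) \<in> ?G'"
  then show "a \<le> p x" using dominated_linear_graph_extension_dominated[OF sn G _ lower upper] by blast
qed

lemma dominated_linear_graph_extend:
  assumes sn: "seminorm p" and G: "dominated_linear_graph p G" and zG: "(z, b) \<in> G"
    and v: "\<And>a. (v, a) \<notin> G"
  obtains G' where "dominated_linear_graph p G'" "G \<subset> G'"
proof -
  obtain c where lower: "\<And>h a. (h, a) \<in> G \<Longrightarrow> a - p (h - v) \<le> c"
    and upper: "\<And>h a. (h, a) \<in> G \<Longrightarrow> c \<le> p (h + v) - a"
    using dominated_linear_graph_extension_value[OF sn G zG] by metis
  let ?G' = "{(h + t *\<^sub>R v, a + t * c) | h a t. (h, a) \<in> G}"
  have "G \<subseteq> ?G'" by force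
  moreover have "(v, c) \<in> ?G'"
    using dominated_linear_graphD(3)[OF G zG, of 0] by (force intro: exI[of _ 1])
  ultimately show ?thesis
    using that dominated_linear_graph_extension[OF sn G v lower upper] v by blast
qed

lemma dominated_linear_graph_line:
  assumes sn: "seminorm p"
  shows "dominated_linear_graph p {(c *\<^sub>R z, c * p z) | c. True}"
  unfolding dominated_linear_graph_def
proof (intro conjI allI impI)
  fix x a b assume "(x, a) \<in> {(c *\<^sub>R z, c * p z) | c. True}" "(x, b) \<in> {(c *\<^sub>R z, c * p z) | c. True}"
  then obtain c1 c2 where "x = c1 *\<^sub>R z" "a = c1 * p z" "x = c2 *\<^sub>R z" "b = c2 * p z"
    by blast
  then show "a = b" using seminorm_zero[OF sn] by (cases "z = 0") auto
next
  fix x a assume "(x, a) \<in> {(c *\<^sub>R z, c * p z) | c. True}"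
  then obtain c where "x = c *\<^sub>R z" "a = c * p z" by blast
  then show "a \<le> p x" using seminorm_scaleR[OF sn, of c z] seminorm_nonneg[OF sn, of z]
    by (simp add: mult_right_mono)
qed (auto intro: exI[of _ "_ + _"] exI[of _ "_ * _"] simp: algebra_simps)

lemma dominated_linear_graph_Union:
  assumes "chain\<^sub>\<subseteq> C" and "\<And>G. G \<in> C \<Longrightarrow> dominated_linear_graph p G"
  shows "dominated_linear_graph p (\<Union>C)"
proof -
  have common: "\<exists>G\<in>C. P \<in> G \<and> Q \<in> G" if "P \<in> \<Union>C" "Q \<in> \<Union>C" for P Q
    using that assms(1) unfolding chain_subset_def by blast
  show ?thesis
    unfolding dominated_linear_graph_def
  proof (intro conjI allI impI)
    fix x a b assume "(x, a) \<in> \<Union>C" "(x, b) \<in> \<Union>C"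
    then show "a = b" using common dominated_linear_graphD(1)[OF assms(2)] by metis
  next
    fix x y a b assume "(x, a) \<in> \<Union>C" "(y, b) \<in> \<Union>C"
    then show "(x + y, a + b) \<in> \<Union>C" using common dominated_linear_graphD(2)[OF assms(2)] by blast
  qed (use dominated_linear_graphD(3,4)[OF assms(2)] in blast)+
qed

theorem hahn_banach_seminorm:
  fixes p :: "'a::real_vector \<Rightarrow> real"
  assumes sn: "seminorm p"
  obtains f where "linear f" "\<And>x. \<bar>f x\<bar> \<le> p x" "f z = p z"
proof -
  define A where "A = {G. dominated_linear_graph p G \<and> (z, p z) \<in> G}"
  have "\<exists>M\<in>A. \<forall>G\<in>A. M \<subseteq> G \<longrightarrow> G = M"
  proof (rule Zorn_Lemma2, intro ballI)
    fix C assume C: "C \<in> chains A"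
    show "\<exists>U\<in>A. \<forall>G\<in>C. G \<subseteq> U"
    proof (cases "C = {}")
      case True
      have "{(c *\<^sub>R z, c * p z) | c. True} \<in> A"
        unfolding A_def using dominated_linear_graph_line[OF sn] by (auto intro: exI[of _ 1])
      then show ?thesis using True by blast
    next
      case False
      have "\<Union>C \<in> A"
        using chainsD2[OF C] False dominated_linear_graph_Union[of C p] C
        unfolding A_def chains_def by blast
      then show ?thesis by blast
    qed
  qed
  then obtain M where M: "dominated_linear_graph p M" "(z, p z) \<in> M"
    and maximal: "\<And>G. dominated_linear_graph p G \<Longrightarrow> (z, p z) \<in> G \<Longrightarrow> M \<subseteq> G \<Longrightarrow> G = M"
    unfolding A_def by blast
  have total: "\<exists>a. (x, a) \<in> M" for x
    using dominated_linear_graph_extend[OF sn M, of x] maximal M(2) by blast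
  define f where "f x = (THE a. (x, a) \<in> M)" for x
  have fM: "(x, a) \<in> M \<longleftrightarrow> a = f x" for x a
    using total[of x] dominated_linear_graphD(1)[OF M(1)] unfolding f_def by (metis theI)
  have lin: "linear f"
    by (rule linearI) (use dominated_linear_graphD(2,3)[OF M(1)] fM in auto)
  have le: "f x \<le> p x" for x using dominated_linear_graphD(4)[OF M(1)] fM by blast
  have "\<bar>f x\<bar> \<le> p x" for x
    using le[of x] le[of "- x"] linear_neg[OF lin, of x] seminorm_minus[OF sn, of x] by linarith
  moreover have "f z = p z" using fM M(2) by simp
  ultimately show ?thesis using that lin by blast
qed

lemma cont_linear_functional_if_dominated:
  fixes f :: "'a::{real_vector,t2_space} \<Rightarrow> real"
  assumes T: "tvs_space TYPE('a)" and sn: "seminorm p" and pc: "continuous_on UNIV p"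
    and lin: "linear f" and bound: "\<And>x. \<bar>f x\<bar> \<le> C * p x"
  shows "cont_linear f"
  unfolding cont_linear_def
proof (intro conjI lin tvs_continuous_on_linear_if_continuous_at_0[OF T tvs_real lin])
  fix V :: "real set" assume "open V" "0 \<in> V"
  then obtain e where e: "e > 0" "ball 0 e \<subseteq> V" using open_contains_ball by blast
  define C' where "C' = \<bar>C\<bar> + 1"
  have C': "C' > 0" by (simp add: C'_def)
  have "f x \<in> V" if "p x < e / C'" for x
  proof -
    have "C * p x \<le> C' * p x" by (intro mult_right_mono) (auto simp: C'_def seminorm_nonneg[OF sn])
    then have "\<bar>f x\<bar> \<le> C' * p x" using bound[of x] by linarith
    also have "\<dots> < e" using that C' by (simp add: pos_less_divide_eq mult.commute)
    finally show ?thesis using e by (auto simp: subset_iff dist_real_def)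
  qed
  moreover have "open {x. p x < e / C'}" using tvs_open_seminorm_ball[OF T pc, of 0] by simp
  moreover have "0 \<in> {x. p x < e / C'}" using seminorm_zero[OF sn] e C' by simp
  ultimately show "\<exists>U. open U \<and> 0 \<in> U \<and> (\<forall>x\<in>U. f x \<in> V)" by blast
qed

lemma continuous_functionals_separate:
  fixes x :: "'a::{real_vector,t2_space}"
  assumes T: "tvs_space TYPE('a)" and LC: "locally_convex_space TYPE('a)" and x: "x \<noteq> 0"
  obtains f :: "'a \<Rightarrow> real" where "cont_linear f" "f x \<noteq> 0"
proof -
  obtain U where U: "open U" "0 \<in> U" "x \<notin> U" using x by (metis separation_t1)
  obtain p where p: "seminorm p" "continuous_on UNIV p" "{y. p y < 1} \<subseteq> U"
    using continuous_seminorm_in_nhds[OF T LC U(1,2)] .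
  obtain f where f: "linear f" "\<And>y. \<bar>f y\<bar> \<le> p y" "f x = p x"
    using hahn_banach_seminorm[OF p(1), where z = x] by blast
  have "cont_linear f" using cont_linear_functional_if_dominated[OF T p(1,2) f(1), of 1] f(2) by simp
  moreover have "\<not> p x < 1" using p(3) U(3) by blast
  then have "f x \<noteq> 0" using f(3) by simp
  ultimately show ?thesis using that by blast
qed

section \<open>Bounded sets and Mackey's theorem\<close>

lemma tvs_bounded_iff_seminorm_bounded:
  fixes B :: "'a::{real_vector,t2_space} set"
  assumes T: "tvs_space TYPE('a)" and LC: "locally_convex_space TYPE('a)"
  shows "tvs_bounded B \<longleftrightarrow>
    (\<forall>p. seminorm p \<and> continuous_on UNIV p \<longrightarrow> (\<exists>K. \<forall>b\<in>B. p b \<le> K))"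
proof (intro iffI allI impI)
  fix p :: "'a \<Rightarrow> real" assume B: "tvs_bounded B" and p: "seminorm p \<and> continuous_on UNIV p"
  have "open {x. p x < 1}" "0 \<in> {x. p x < 1}"
    using tvs_open_seminorm_ball[OF T, of p 0 1] seminorm_zero[of p] p by auto
  then obtain s where s: "s > 0" "\<forall>t. t > s \<longrightarrow> B \<subseteq> (\<lambda>x. t *\<^sub>R x) ` {x. p x < 1}"
    using B unfolding tvs_bounded_def by blast
  have "p b \<le> s + 1" if "b \<in> B" for b
  proof -
    have "b \<in> (\<lambda>x. (s + 1) *\<^sub>R x) ` {x. p x < 1}" using s(2)[rule_format, of "s + 1"] s(1) that by auto
    then obtain u where u: "b = (s + 1) *\<^sub>R u" "p u < 1" by blast
    then have "p b = (s + 1) * p u" using seminorm_scaleR[of p "s + 1" u] p s by simp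
    also have "\<dots> \<le> s + 1" using u(2) s by (simp add: mult_left_le)
    finally show ?thesis .
  qed
  then show "\<exists>K. \<forall>b\<in>B. p b \<le> K" by blast
next
  assume H: "\<forall>p. seminorm p \<and> continuous_on UNIV p \<longrightarrow> (\<exists>K. \<forall>b\<in>B. p b \<le> K)"
  show "tvs_bounded B" unfolding tvs_bounded_def
  proof (intro allI impI)
    fix U :: "'a set" assume "open U \<and> 0 \<in> U"
    then obtain p where p: "seminorm p" "continuous_on UNIV p" "{y. p y < 1} \<subseteq> U"
      using continuous_seminorm_in_nhds[OF T LC] by blast
    obtain K where K: "\<forall>b\<in>B. p b \<le> K" using H p by blast
    have "B \<subseteq> (\<lambda>x. t *\<^sub>R x) ` U" if t: "t > \<bar>K\<bar> + 1" for t
    proof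
      fix b assume b: "b \<in> B"
      have t0: "t > 0" using t by linarith
      have "p (inverse t *\<^sub>R b) = inverse t * p b" using seminorm_scaleR[OF p(1)] t0 by simp
      also have "\<dots> < 1"
      proof -
        have "p b < t" using K b t abs_ge_self[of K] by fastforce
        then show ?thesis using t0 by (simp add: field_simps)
      qed
      finally have "inverse t *\<^sub>R b \<in> U" using p(3) by blast
      moreover have "b = t *\<^sub>R (inverse t *\<^sub>R b)" using t0 by simp
      ultimately show "b \<in> (\<lambda>x. t *\<^sub>R x) ` U" by (rule rev_image_eqI)
    qed
    then show "\<exists>s>0. \<forall>t. t > s \<longrightarrow> B \<subseteq> (\<lambda>x. t *\<^sub>R x) ` U"
      by (intro exI[of _ "\<bar>K\<bar> + 1"]) auto
  qed
qed

lemma tvs_bounded_closure: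
  fixes B :: "'a::{real_vector,t2_space} set"
  assumes T: "tvs_space TYPE('a)" and LC: "locally_convex_space TYPE('a)" and B: "tvs_bounded B"
  shows "tvs_bounded (closure B)"
  unfolding tvs_bounded_iff_seminorm_bounded[OF T LC]
proof (intro allI impI)
  fix p :: "'a \<Rightarrow> real" assume p: "seminorm p \<and> continuous_on UNIV p"
  obtain K where "\<forall>b\<in>B. p b \<le> K" using B p unfolding tvs_bounded_iff_seminorm_bounded[OF T LC] by blast
  moreover have "closed {x. p x \<le> K}" using p by (intro closed_Collect_le) auto
  ultimately have "closure B \<subseteq> {x. p x \<le> K}" by (intro closure_minimal) auto
  then show "\<exists>K. \<forall>b\<in>closure B. p b \<le> K" by blast
qed

lemma tvs_bounded_singleton:
  fixes e :: "'a::{real_vector,t2_space}"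
  assumes T: "tvs_space TYPE('a)" and LC: "locally_convex_space TYPE('a)"
  shows "tvs_bounded {e}"
  unfolding tvs_bounded_iff_seminorm_bounded[OF T LC] by auto

locale seminorm_dual =
  fixes p :: "'a::real_vector \<Rightarrow> real"
  assumes seminorm: "seminorm p"
begin

definition dual :: "('a \<Rightarrow> real) set" where
  "dual = {f. linear f \<and> (\<exists>C. \<forall>x. \<bar>f x\<bar> \<le> C * p x)}"

definition dual_norm :: "('a \<Rightarrow> real) \<Rightarrow> real" where
  "dual_norm f = Sup {\<bar>f x\<bar> | x. p x \<le> 1}"

definition dual_dist :: "('a \<Rightarrow> real) \<Rightarrow> ('a \<Rightarrow> real) \<Rightarrow> real" where
  "dual_dist f g = (if f \<in> dual \<and> g \<in> dual then dual_norm (\<lambda>x. f x - g x) else 0)"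

lemma p_nonneg: "0 \<le> p x"
  by (rule seminorm_nonneg[OF seminorm])

lemma zero_in_dual: "(\<lambda>x. 0) \<in> dual"
  unfolding dual_def by (auto intro: exI[of _ 0] linear_zero)

lemma dual_add_scaled:
  assumes "f \<in> dual" "g \<in> dual"
  shows "(\<lambda>x. f x + c * g x) \<in> dual"
proof -
  obtain C1 C2 where C: "\<And>x. \<bar>f x\<bar> \<le> C1 * p x" "\<And>x. \<bar>g x\<bar> \<le> C2 * p x"
    and lin: "linear f" "linear g" using assms unfolding dual_def by blast
  have "\<bar>f x + c * g x\<bar> \<le> (C1 + \<bar>c\<bar> * C2) * p x" for x
  proof -
    have "\<bar>c * g x\<bar> \<le> \<bar>c\<bar> * (C2 * p x)" using C(2) by (simp add: abs_mult mult_left_mono)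
    then show ?thesis using C(1)[of x] by (simp add: algebra_simps)
  qed
  moreover have "linear (\<lambda>x. f x + c * g x)"
    by (rule linearI) (simp_all add: linear_add[OF lin(1)] linear_add[OF lin(2)]
        linear_scale[OF lin(1)] linear_scale[OF lin(2)] algebra_simps)
  ultimately show ?thesis unfolding dual_def by blast
qed

lemma dual_diff: "f \<in> dual \<Longrightarrow> g \<in> dual \<Longrightarrow> (\<lambda>x. f x - g x) \<in> dual"
  using dual_add_scaled[of f g "-1"] by simp

lemma dual_norm_upper:
  assumes "f \<in> dual" "p x \<le> 1"
  shows "\<bar>f x\<bar> \<le> dual_norm f"
proof -
  obtain C where C: "\<And>x. \<bar>f x\<bar> \<le> C * p x" using assms(1) unfolding dual_def by blast
  have "\<bar>f y\<bar> \<le> \<bar>C\<bar>" if "p y \<le> 1" for y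
    using C[of y] mult_mono[OF abs_ge_self that _ p_nonneg, of C] by simp
  then have "bdd_above {\<bar>f x\<bar> | x. p x \<le> 1}" by (intro bdd_aboveI[of _ "\<bar>C\<bar>"]) blast
  then show ?thesis unfolding dual_norm_def using assms(2) by (intro cSup_upper) auto
qed

lemma dual_norm_least:
  assumes "\<And>x. p x \<le> 1 \<Longrightarrow> \<bar>f x\<bar> \<le> B"
  shows "dual_norm f \<le> B"
proof -
  have "p 0 \<le> 1" by (simp add: seminorm_zero[OF seminorm])
  then have "{\<bar>f x\<bar> | x. p x \<le> 1} \<noteq> {}" by blast
  then show ?thesis unfolding dual_norm_def by (rule cSup_least) (use assms in auto)
qed

lemma dual_norm_nonneg: "f \<in> dual \<Longrightarrow> 0 \<le> dual_norm f"
  using dual_norm_upper[of f 0] seminorm_zero[OF seminorm] by simp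

lemma dual_norm_bound:
  assumes f: "f \<in> dual"
  shows "\<bar>f x\<bar> \<le> dual_norm f * p x"
proof (cases "p x = 0")
  case True
  obtain C where "\<And>x. \<bar>f x\<bar> \<le> C * p x" using f unfolding dual_def by blast
  then show ?thesis using True by (metis mult_zero_right)
next
  case False
  then have pos: "p x > 0" using p_nonneg[of x] by simp
  have "linear f" using f unfolding dual_def by blast
  then have "f (inverse (p x) *\<^sub>R x) = inverse (p x) * f x" by (simp add: linear_scale)
  moreover have "p (inverse (p x) *\<^sub>R x) = 1" using seminorm_scaleR[OF seminorm] pos by simp
  ultimately have "inverse (p x) * \<bar>f x\<bar> \<le> dual_norm f"
    using dual_norm_upper[OF f, of "inverse (p x) *\<^sub>R x"] pos by (simp add: abs_mult)
  then show ?thesis using pos by (simp add: field_simps)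
qed

lemma dual_dist_bound:
  "f \<in> dual \<Longrightarrow> g \<in> dual \<Longrightarrow> \<bar>f x - g x\<bar> \<le> dual_dist f g * p x"
  using dual_norm_bound[OF dual_diff] by (simp add: dual_dist_def)

lemma Metric_space_dual: "Metric_space dual dual_dist"
proof
  fix f g show "0 \<le> dual_dist f g" unfolding dual_dist_def using dual_norm_nonneg dual_diff by auto
next
  fix f g show "dual_dist f g = dual_dist g f"
    unfolding dual_dist_def dual_norm_def by (simp add: abs_minus_commute conj_commute)
next
  fix f g assume f: "f \<in> dual" and g: "g \<in> dual"
  show "dual_dist f g = 0 \<longleftrightarrow> f = g"
  proof
    assume "dual_dist f g = 0"
    then show "f = g" using dual_dist_bound[OF f g] by (intro ext) (metis abs_le_zero_iff mult_zero_left right_minus_eq)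
  next
    assume "f = g"
    then show "dual_dist f g = 0"
      using dual_norm_least[of "\<lambda>x. f x - g x" 0] dual_norm_nonneg[OF dual_diff[OF f g]] f g
      by (simp add: dual_dist_def)
  qed
next
  fix f g h assume f: "f \<in> dual" and g: "g \<in> dual" and h: "h \<in> dual"
  have "dual_norm (\<lambda>x. f x - h x) \<le> dual_norm (\<lambda>x. f x - g x) + dual_norm (\<lambda>x. g x - h x)"
  proof (rule dual_norm_least)
    fix x assume "p x \<le> 1"
    then show "\<bar>f x - h x\<bar> \<le> dual_norm (\<lambda>x. f x - g x) + dual_norm (\<lambda>x. g x - h x)"
      using dual_norm_upper[OF dual_diff[OF f g]] dual_norm_upper[OF dual_diff[OF g h]]
      by fastforce
  qed
  then show "dual_dist f h \<le> dual_dist f g + dual_dist g h" using f g h by (simp add: dual_dist_def)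
qed

sublocale Dual: Metric_space dual dual_dist
  by (rule Metric_space_dual)

end

context seminorm_dual
begin

lemma MCauchy_uniform_estimate:
  assumes "Dual.MCauchy \<sigma>" "\<epsilon> > 0"
  obtains N where "\<And>n m x. N \<le> n \<Longrightarrow> N \<le> m \<Longrightarrow> \<bar>\<sigma> n x - \<sigma> m x\<bar> \<le> \<epsilon> * p x"
proof -
  obtain N where N: "\<And>n m. N \<le> n \<Longrightarrow> N \<le> m \<Longrightarrow> dual_dist (\<sigma> n) (\<sigma> m) < \<epsilon>"
    using assms(1)[unfolded Dual.MCauchy_def] assms(2) by blast
  have "\<sigma> n \<in> dual" for n using assms(1) unfolding Dual.MCauchy_def by auto
  then have "\<bar>\<sigma> n x - \<sigma> m x\<bar> \<le> \<epsilon> * p x" if "N \<le> n" "N \<le> m" for n m x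
    using dual_dist_bound[of "\<sigma> n" "\<sigma> m" x] mult_right_mono[OF less_imp_le[OF N[OF that]] p_nonneg[of x]]
    by simp
  then show ?thesis using that by blast
qed

lemma MCauchy_pointwise_Cauchy:
  assumes "Dual.MCauchy \<sigma>"
  shows "Cauchy (\<lambda>n. \<sigma> n x)"
proof (rule metric_CauchyI)
  fix e :: real assume e: "e > 0"
  then have e': "e / (p x + 1) > 0" using p_nonneg[of x] by simp
  obtain N where N: "\<And>n m y. N \<le> n \<Longrightarrow> N \<le> m \<Longrightarrow> \<bar>\<sigma> n y - \<sigma> m y\<bar> \<le> e / (p x + 1) * p y"
    using MCauchy_uniform_estimate[OF assms e'] by metis
  have "e / (p x + 1) * p x < e / (p x + 1) * (p x + 1)" using e' by (intro mult_strict_left_mono) auto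
  also have "\<dots> = e" using p_nonneg[of x] by (simp add: field_simps)
  finally have "\<bar>\<sigma> m x - \<sigma> n x\<bar> < e" if "N \<le> m" "N \<le> n" for m n
    using N[OF that, of x] by linarith
  then show "\<exists>N. \<forall>m\<ge>N. \<forall>n\<ge>N. dist (\<sigma> m x) (\<sigma> n x) < e"
    by (auto simp: dist_real_def)
qed

lemma MCauchy_pointwise_limit_in_dual:
  assumes C: "Dual.MCauchy \<sigma>" and lim: "\<And>x. (\<lambda>n. \<sigma> n x) \<longlonglongrightarrow> f x"
  shows "f \<in> dual"
proof -
  have \<sigma>: "\<sigma> n \<in> dual" for n using C unfolding Dual.MCauchy_def by auto
  have "linear f"
  proof (rule linearI)
    fix x y
    have "(\<lambda>n. \<sigma> n (x + y)) \<longlonglongrightarrow> f x + f y"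
      using tendsto_add[OF lim lim] \<sigma> unfolding dual_def by (simp add: linear_add)
    then show "f (x + y) = f x + f y" using LIMSEQ_unique[OF lim] by simp
  next
    fix c :: real and x
    have "(\<lambda>n. \<sigma> n (c *\<^sub>R x)) \<longlonglongrightarrow> c * f x"
      using tendsto_mult[OF tendsto_const lim] \<sigma> unfolding dual_def by (simp add: linear_scale)
    then show "f (c *\<^sub>R x) = c *\<^sub>R f x" using LIMSEQ_unique[OF lim] by simp
  qed
  moreover obtain N where N: "\<And>n m x. N \<le> n \<Longrightarrow> N \<le> m \<Longrightarrow> \<bar>\<sigma> n x - \<sigma> m x\<bar> \<le> 1 * p x"
    using MCauchy_uniform_estimate[OF C zero_less_one] by metis
  have "\<bar>f x\<bar> \<le> (dual_norm (\<sigma> N) + 1) * p x" for x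
  proof (rule LIMSEQ_le_const2[OF tendsto_rabs[OF lim]], intro exI allI impI)
    fix n assume "N \<le> n"
    then show "\<bar>\<sigma> n x\<bar> \<le> (dual_norm (\<sigma> N) + 1) * p x"
      using N[of n N x] dual_norm_bound[OF \<sigma>, of N x] by (simp add: algebra_simps)
  qed
  ultimately show ?thesis unfolding dual_def by blast
qed

lemma mcomplete_dual: "Dual.mcomplete"
  unfolding Dual.mcomplete_def
proof (intro allI impI)
  fix \<sigma> assume C: "Dual.MCauchy \<sigma>"
  define f where "f x = lim (\<lambda>n. \<sigma> n x)" for x
  have lim: "(\<lambda>n. \<sigma> n x) \<longlonglongrightarrow> f x" for x
    using MCauchy_pointwise_Cauchy[OF C, of x] unfolding f_def
    by (simp add: Cauchy_convergent_iff convergent_LIMSEQ_iff)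
  have \<sigma>: "\<sigma> n \<in> dual" for n using C unfolding Dual.MCauchy_def by auto
  have f: "f \<in> dual" by (rule MCauchy_pointwise_limit_in_dual[OF C lim])
  have "\<forall>\<^sub>F n in sequentially. \<sigma> n \<in> dual \<and> dual_dist (\<sigma> n) f < \<epsilon>" if \<epsilon>: "\<epsilon> > 0" for \<epsilon>
  proof -
    obtain N where N: "\<And>n m x. N \<le> n \<Longrightarrow> N \<le> m \<Longrightarrow> \<bar>\<sigma> n x - \<sigma> m x\<bar> \<le> \<epsilon> / 2 * p x"
      using MCauchy_uniform_estimate[OF C half_gt_zero[OF \<epsilon>]] by metis
    have "dual_norm (\<lambda>x. \<sigma> n x - f x) \<le> \<epsilon> / 2" if n: "N \<le> n" for n
    proof (rule dual_norm_least)
      fix x assume px: "p x \<le> 1"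
      have "(\<lambda>m. \<bar>\<sigma> n x - \<sigma> m x\<bar>) \<longlonglongrightarrow> \<bar>\<sigma> n x - f x\<bar>"
        by (intro tendsto_rabs tendsto_diff tendsto_const lim)
      moreover have "\<epsilon> / 2 * p x \<le> \<epsilon> / 2" using px \<epsilon> by (simp add: mult_left_le)
      then have "\<bar>\<sigma> n x - \<sigma> m x\<bar> \<le> \<epsilon> / 2" if "N \<le> m" for m
        using N[OF n that, of x] by linarith
      ultimately show "\<bar>\<sigma> n x - f x\<bar> \<le> \<epsilon> / 2" by (intro LIMSEQ_le_const2) auto
    qed
    then show ?thesis
      using \<sigma> f \<epsilon> unfolding eventually_sequentially dual_dist_def by fastforce
  qed
  then show "\<exists>f. limitin Dual.mtopology \<sigma> f sequentially"
    using f unfolding Dual.limitin_metric by blast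
qed

lemma closedin_dual_bounded_on:
  "closedin Dual.mtopology {f \<in> dual. \<forall>a\<in>A. \<bar>f a\<bar> \<le> c}"
  unfolding Dual.closedin_metric
proof (intro conjI allI impI)
  fix g assume "g \<in> dual - {f \<in> dual. \<forall>a\<in>A. \<bar>f a\<bar> \<le> c}"
  then obtain a where g: "g \<in> dual" and a: "a \<in> A" "\<bar>g a\<bar> > c" by force
  define r where "r = (\<bar>g a\<bar> - c) / (p a + 1)"
  have r: "r > 0" using a p_nonneg[of a] by (simp add: r_def)
  have "\<bar>h a\<bar> > c" if h: "h \<in> dual" "dual_dist g h < r" for h
  proof -
    have "\<bar>g a - h a\<bar> \<le> r * p a"
      using dual_dist_bound[OF g h(1), of a] mult_right_mono[OF less_imp_le[OF h(2)] p_nonneg[of a]]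
      by linarith
    also have "\<dots> < \<bar>g a\<bar> - c"
      using r p_nonneg[of a] a(2) by (simp add: r_def field_simps)
    finally show ?thesis by linarith
  qed
  then show "\<exists>r>0. disjnt {f \<in> dual. \<forall>a\<in>A. \<bar>f a\<bar> \<le> c} (Dual.mball g r)"
    using r a(1) by (force simp: disjnt_def)
qed blast

end

theorem weakly_bounded_imp_seminorm_bounded:
  fixes A :: "'a::{real_vector,t2_space} set" and p :: "'a \<Rightarrow> real"
  assumes T: "tvs_space TYPE('a)" and sn: "seminorm p" and pc: "continuous_on UNIV p"
    and weak: "\<And>f::'a \<Rightarrow> real. cont_linear f \<Longrightarrow> \<exists>C. \<forall>a\<in>A. \<bar>f a\<bar> \<le> C"
  shows "\<exists>K. \<forall>a\<in>A. p a \<le> K"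
proof -
  interpret seminorm_dual p using sn by unfold_locales
  define level where "level n = {f \<in> dual. \<forall>a\<in>A. \<bar>f a\<bar> \<le> real n}" for n :: nat
  have "dual \<subseteq> \<Union>(range level)"
  proof
    fix f assume f: "f \<in> dual"
    then have "cont_linear f" using cont_linear_functional_if_dominated[OF T sn pc] unfolding dual_def by blast
    then obtain C where "\<forall>a\<in>A. \<bar>f a\<bar> \<le> C" using weak by blast
    then have "f \<in> level (nat \<lceil>C\<rceil>)"
      using f real_nat_ceiling_ge[of C] unfolding level_def by (auto intro: order_trans)
    then show "f \<in> \<Union>(range level)" by blast
  qed
  then have "\<Union>(range level) = dual" by (auto simp: level_def)
  moreover have "Dual.mtopology interior_of dual = dual"
    using Dual.topspace_mtopology interior_of_topspace by metis
  then have "Dual.mtopology interior_of dual \<noteq> {}" using zero_in_dual by auto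
  ultimately have "\<exists>n. Dual.mtopology interior_of level n \<noteq> {}"
    using Dual.metric_Baire_category_alt[OF mcomplete_dual, of "range level"]
      closedin_dual_bounded_on unfolding level_def by force
  then obtain n where "Dual.mtopology interior_of level n \<noteq> {}" ..
  then obtain f0 \<epsilon> where f0: "f0 \<in> dual" and \<epsilon>: "\<epsilon> > 0" and ball: "Dual.mball f0 \<epsilon> \<subseteq> level n"
    using Dual.in_interior_of_mball by blast
  \<comment> \<open>Perturbing f0 by a functional norming a stays in the ball and forces p a \<le> 4n/\<epsilon>.\<close>
  have "p a \<le> 4 * real n / \<epsilon>" if a: "a \<in> A" for a
  proof -
    obtain g where g: "linear g" "\<And>x. \<bar>g x\<bar> \<le> p x" "g a = p a"
      using hahn_banach_seminorm[OF sn, where z = a] by blast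
    have "g \<in> dual" unfolding dual_def using g by (auto intro!: exI[of _ 1])
    then have h: "(\<lambda>x. f0 x + (\<epsilon> / 2) * g x) \<in> dual" by (rule dual_add_scaled[OF f0])
    have "dual_norm (\<lambda>x. f0 x - (f0 x + (\<epsilon> / 2) * g x)) \<le> \<epsilon> / 2"
      using g(2) \<epsilon> by (intro dual_norm_least) (auto simp: abs_mult intro: mult_left_le order_trans)
    then have "(\<lambda>x. f0 x + (\<epsilon> / 2) * g x) \<in> level n"
      using ball f0 h \<epsilon> by (auto simp: subset_iff dual_dist_def)
    then have "\<bar>f0 a + (\<epsilon> / 2) * p a\<bar> \<le> real n" "\<bar>f0 a\<bar> \<le> real n"
      using a g(3) ball f0 \<epsilon> unfolding level_def by (auto simp: subset_iff)
    then show ?thesis using \<epsilon> by (simp add: field_simps)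
  qed
  then show ?thesis by blast
qed

lemma weakly_bounded_imp_bounded:
  fixes A :: "'a::{real_vector,t2_space} set"
  assumes T: "tvs_space TYPE('a)" and LC: "locally_convex_space TYPE('a)"
    and weak: "\<And>f::'a \<Rightarrow> real. cont_linear f \<Longrightarrow> \<exists>C. \<forall>a\<in>A. \<bar>f a\<bar> \<le> C"
  shows "tvs_bounded A"
  unfolding tvs_bounded_iff_seminorm_bounded[OF T LC]
  using weakly_bounded_imp_seminorm_bounded[OF T _ _ weak] by blast

section \<open>Weakly differentiable curves\<close>

lemma difference_quotient_bounded:
  fixes g :: "real \<Rightarrow> real"
  assumes S: "compact S" "t0 \<in> S" and cont: "continuous_on S g"
    and der: "(g has_real_derivative d) (at t0 within S)"
  shows "\<exists>C. \<forall>t\<in>S. t \<noteq> t0 \<longrightarrow> \<bar>(g t - g t0) / (t - t0)\<bar> \<le> C"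
proof -
  obtain M where M: "\<And>t. t \<in> S \<Longrightarrow> \<bar>g t\<bar> \<le> M"
    using compact_imp_bounded[OF compact_continuous_image[OF cont S(1)]] bounded_real by force
  have "\<forall>\<^sub>F t in at t0 within S. dist ((g t - g t0) / (t - t0)) d < 1"
    using der unfolding has_field_derivative_iff by (rule tendstoD) simp
  then obtain \<delta> where \<delta>: "\<delta> > 0"
    and near: "\<And>t. t \<in> S \<Longrightarrow> t \<noteq> t0 \<Longrightarrow> dist t t0 < \<delta> \<Longrightarrow> dist ((g t - g t0) / (t - t0)) d < 1"
    unfolding eventually_at by blast
  have "\<bar>(g t - g t0) / (t - t0)\<bar> \<le> \<bar>d\<bar> + 1 + 2 * M / \<delta>" if t: "t \<in> S" "t \<noteq> t0" for t
  proof (cases "dist t t0 < \<delta>")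
    case True
    have "\<bar>(g t - g t0) / (t - t0) - d\<bar> < 1" using near[OF t True] by (simp add: dist_real_def)
    moreover have "0 \<le> 2 * M / \<delta>" using M[OF S(2)] \<delta> by simp
    ultimately show ?thesis by linarith
  next
    case False
    then have far: "\<delta> \<le> \<bar>t - t0\<bar>" by (simp add: dist_real_def)
    have diff: "\<bar>g t - g t0\<bar> \<le> 2 * M" using M[OF t(1)] M[OF S(2)] by linarith
    have "\<bar>(g t - g t0) / (t - t0)\<bar> = \<bar>g t - g t0\<bar> / \<bar>t - t0\<bar>" by (simp add: abs_divide)
    also have "\<dots> \<le> 2 * M / \<bar>t - t0\<bar>" using diff by (intro divide_right_mono) auto
    also have "\<dots> \<le> 2 * M / \<delta>" using far \<delta> diff by (intro divide_left_mono) auto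
    finally show ?thesis by linarith
  qed
  then show ?thesis by blast
qed

lemma linear_difference_quotient:
  assumes "linear f"
  shows "f ((1 / (t - t0)) *\<^sub>R (x - y)) = (f x - f y) / (t - t0)"
  using linear_scale[OF assms] linear_diff[OF assms] by simp

lemma weakly_differentiable_imp_difference_quotients_bounded:
  fixes F :: "real \<Rightarrow> 'f::{real_vector,t2_space}"
  assumes T: "tvs_space TYPE('f)" and LC: "locally_convex_space TYPE('f)"
    and S: "compact S" "t0 \<in> S" and cont: "continuous_on S F"
    and der: "\<And>f. cont_linear f \<Longrightarrow> \<exists>d. ((\<lambda>t. f (F t)) has_real_derivative d) (at t0 within S)"
  shows "tvs_bounded {(1 / (t - t0)) *\<^sub>R (F t - F t0) | t. t \<in> S \<and> t \<noteq> t0}"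
proof (rule weakly_bounded_imp_bounded[OF T LC])
  fix f :: "'f \<Rightarrow> real" assume f: "cont_linear f"
  then have "continuous_on S (\<lambda>t. f (F t))"
    using continuous_on_compose2[OF _ cont] unfolding cont_linear_def by blast
  then obtain C where C: "\<forall>t\<in>S. t \<noteq> t0 \<longrightarrow> \<bar>(f (F t) - f (F t0)) / (t - t0)\<bar> \<le> C"
    using difference_quotient_bounded[OF S] der[OF f] by blast
  have "\<bar>f a\<bar> \<le> C" if "a \<in> {(1 / (t - t0)) *\<^sub>R (F t - F t0) | t. t \<in> S \<and> t \<noteq> t0}" for a
    using that C linear_difference_quotient[of f] f unfolding cont_linear_def by auto
  then show "\<exists>C. \<forall>a\<in>{(1 / (t - t0)) *\<^sub>R (F t - F t0) | t. t \<in> S \<and> t \<noteq> t0}. \<bar>f a\<bar> \<le> C"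
    by blast
qed

lemma cluster_point_continuous_limit:
  fixes f :: "'a::t2_space \<Rightarrow> 'b::t2_space"
  assumes "inf (nhds x) G \<noteq> bot" "isCont f x" "(f \<longlongrightarrow> d) G"
  shows "f x = d"
proof -
  have "(f \<longlongrightarrow> f x) (inf (nhds x) G)"
    using assms(2) unfolding isCont_def tendsto_at_iff_tendsto_nhds by (rule tendsto_mono[rotated]) simp
  moreover have "(f \<longlongrightarrow> d) (inf (nhds x) G)" using assms(3) by (rule tendsto_mono[rotated]) simp
  ultimately show ?thesis using tendsto_unique[OF assms(1)] by blast
qed

lemma compact_unique_cluster_point_imp_tendsto:
  fixes q :: "'i \<Rightarrow> 'a::topological_space"
  assumes K: "compact K" "eventually (\<lambda>s. q s \<in> K) F" and F: "F \<noteq> bot"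
    and unique: "\<And>x y. inf (nhds x) (filtermap q F) \<noteq> bot \<Longrightarrow> inf (nhds y) (filtermap q F) \<noteq> bot \<Longrightarrow> x = y"
  obtains D where "(q \<longlongrightarrow> D) F"
proof -
  have cluster: "\<exists>x. inf (nhds x) (inf (filtermap q F) (principal A)) \<noteq> bot"
    if "inf (filtermap q F) (principal A) \<noteq> bot" for A
  proof -
    have "eventually (\<lambda>x. x \<in> K) (inf (filtermap q F) (principal A))"
      using K(2) unfolding eventually_inf_principal eventually_filtermap by (auto elim: eventually_mono)
    then show ?thesis using K(1) that unfolding compact_filter by blast
  qed
  obtain D where D: "inf (nhds D) (filtermap q F) \<noteq> bot"
    using cluster[of UNIV] F by (auto simp: filtermap_bot_iff)
  have "eventually (\<lambda>s. q s \<in> W) F" if W: "open W" "D \<in> W" for W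
  proof (rule ccontr)
    define G where "G = inf (filtermap q F) (principal (- W))"
    assume "\<not> eventually (\<lambda>s. q s \<in> W) F"
    then have "G \<noteq> bot" by (simp add: G_def trivial_limit_def eventually_inf_principal eventually_filtermap)
    then obtain D' where D': "inf (nhds D') G \<noteq> bot" using cluster unfolding G_def by blast
    moreover have "inf (nhds D') G \<le> inf (nhds D') (filtermap q F)" by (simp add: G_def le_infI2)
    ultimately have "inf (nhds D') (filtermap q F) \<noteq> bot" by (metis le_bot)
    then have "D' \<in> W" using unique[OF D] W(2) by blast
    then have "eventually (\<lambda>x. x \<in> W) (nhds D')" by (rule eventually_nhds_in_open[OF W(1)])
    then have "eventually (\<lambda>x. x \<in> W) (inf (nhds D') G)" by (rule filter_leD[rotated]) simp
    moreover have "eventually (\<lambda>x. x \<in> - W) G" by (simp add: G_def eventually_inf_principal)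
    then have "eventually (\<lambda>x. x \<in> - W) (inf (nhds D') G)" by (rule filter_leD[rotated]) simp
    ultimately have "eventually (\<lambda>x. False) (inf (nhds D') G)"
      by (rule eventually_elim2) simp
    then show False using D' by (simp add: trivial_limit_def)
  qed
  then show ?thesis using that unfolding tendsto_def by blast
qed

lemma has_real_derivative_linear_comp_iff:
  assumes "linear f"
  shows "((\<lambda>t. f (F t)) has_real_derivative d) (at t0 within S) \<longleftrightarrow>
    ((\<lambda>t. f ((1 / (t - t0)) *\<^sub>R (F t - F t0))) \<longlongrightarrow> d) (at t0 within S)"
  unfolding has_field_derivative_iff linear_difference_quotient[OF assms] ..

lemma cont_linear_isCont: "cont_linear f \<Longrightarrow> isCont f x"
  unfolding cont_linear_def by (simp add: continuous_on_eq_continuous_at)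

theorem montel_weakly_differentiable_imp_differentiable:
  fixes F :: "real \<Rightarrow> 'f::{real_vector,t2_space}"
  assumes Mo: "montel_space TYPE('f)" and S: "compact S" "t0 \<in> S" "at t0 within S \<noteq> bot"
    and cont: "continuous_on S F"
    and der: "\<And>f. cont_linear f \<Longrightarrow> \<exists>d. ((\<lambda>t. f (F t)) has_real_derivative d) (at t0 within S)"
  obtains D where "((\<lambda>t. (1 / (t - t0)) *\<^sub>R (F t - F t0)) \<longlongrightarrow> D) (at t0 within S)"
    and "\<And>f. cont_linear f \<Longrightarrow> ((\<lambda>t. f (F t)) has_real_derivative f D) (at t0 within S)"
proof -
  have T: "tvs_space TYPE('f)" and LC: "locally_convex_space TYPE('f)"
    and closed_bounded: "\<And>B::'f set. tvs_bounded B \<Longrightarrow> closed B \<Longrightarrow> compact B"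
    using Mo unfolding montel_space_def by auto
  define q where "q t = (1 / (t - t0)) *\<^sub>R (F t - F t0)" for t
  define A where "A = {q t | t. t \<in> S \<and> t \<noteq> t0}"
  have K: "compact (closure A)"
    using weakly_differentiable_imp_difference_quotients_bounded[OF T LC S(1,2) cont der]
    by (intro closed_bounded tvs_bounded_closure[OF T LC]) (simp_all add: A_def q_def)
  have evK: "eventually (\<lambda>t. q t \<in> closure A) (at t0 within S)"
    unfolding eventually_at_filter
    by (rule always_eventually) (auto simp: A_def intro: closure_subset[THEN subsetD])
  have unique: "x = y"
    if x: "inf (nhds x) (filtermap q (at t0 within S)) \<noteq> bot"
      and y: "inf (nhds y) (filtermap q (at t0 within S)) \<noteq> bot" for x y
  proof (rule ccontr)
    assume "x \<noteq> y"
    then obtain f :: "'f \<Rightarrow> real" where f: "cont_linear f" "f (x - y) \<noteq> 0"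
      using continuous_functionals_separate[OF T LC, of "x - y"] by auto
    obtain d where "((\<lambda>t. f (q t)) \<longlongrightarrow> d) (at t0 within S)"
      using der[OF f(1)] has_real_derivative_linear_comp_iff f(1) unfolding cont_linear_def q_def by blast
    then have "(f \<longlongrightarrow> d) (filtermap q (at t0 within S))" by (simp add: filterlim_filtermap)
    then have "f x = d" "f y = d"
      using cluster_point_continuous_limit[OF _ cont_linear_isCont[OF f(1)]] x y by blast+
    then show False using f unfolding cont_linear_def by (simp add: linear_diff)
  qed
  obtain D where lim: "(q \<longlongrightarrow> D) (at t0 within S)"
    using compact_unique_cluster_point_imp_tendsto[OF K evK S(3) unique] by blast
  have "((\<lambda>t. f (F t)) has_real_derivative f D) (at t0 within S)" if f: "cont_linear f" for f
    using isCont_tendsto_compose[OF cont_linear_isCont[OF f] lim] has_real_derivative_linear_comp_iff f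
    unfolding cont_linear_def q_def by blast
  then show ?thesis using that lim unfolding q_def by blast
qed

section \<open>Weakly differentiable operator families\<close>

lemma Lb_tendsto_imp_tendsto_apply:
  fixes G :: "'i \<Rightarrow> 'e::{real_vector,t2_space} \<Rightarrow> 'f::{real_vector,t2_space}"
  assumes Te: "tvs_space TYPE('e)" and LCe: "locally_convex_space TYPE('e)"
    and Tf: "tvs_space TYPE('f)" and lim: "Lb_tendsto G L F"
  shows "((\<lambda>s. G s e) \<longlongrightarrow> L e) F"
  unfolding tendsto_def
proof (intro allI impI)
  fix W assume W: "open W" "L e \<in> W"
  have "open {z. z + L e \<in> W}" "0 \<in> {z. z + L e \<in> W}"
    using tvs_open_translate[OF Tf W(1)] W(2) by auto
  then have "eventually (\<lambda>s. \<forall>e'\<in>{e}. G s e' - L e' \<in> {z. z + L e \<in> W}) F"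
    using lim tvs_bounded_singleton[OF Te LCe, of e] unfolding Lb_tendsto_def by blast
  then show "eventually (\<lambda>s. G s e \<in> W) F" by (auto elim: eventually_mono)
qed

lemma tvs_linear_pointwise_limit:
  fixes G :: "'i \<Rightarrow> 'e::real_vector \<Rightarrow> 'f::{real_vector,t2_space}"
  assumes Tf: "tvs_space TYPE('f)" and F: "F \<noteq> bot"
    and lin: "eventually (\<lambda>s. linear (G s)) F" and lim: "\<And>e. ((\<lambda>s. G s e) \<longlongrightarrow> D e) F"
  shows "linear D"
proof (rule linearI)
  fix x y
  have "((\<lambda>s. G s x + G s y) \<longlongrightarrow> D x + D y) F" by (rule tvs_tendsto_add[OF Tf lim lim])
  moreover have "eventually (\<lambda>s. G s x + G s y = G s (x + y)) F"
    using lin by (rule eventually_mono) (simp add: linear_add)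
  ultimately have "((\<lambda>s. G s (x + y)) \<longlongrightarrow> D x + D y) F" by (rule Lim_transform_eventually)
  then show "D (x + y) = D x + D y" using tendsto_unique[OF F lim] by blast
next
  fix c :: real and x
  have "((\<lambda>s. c *\<^sub>R G s x) \<longlongrightarrow> c *\<^sub>R D x) F" by (rule tvs_tendsto_scaleR[OF Tf tendsto_const lim])
  moreover have "eventually (\<lambda>s. c *\<^sub>R G s x = G s (c *\<^sub>R x)) F"
    using lin by (rule eventually_mono) (simp add: linear_scale)
  ultimately have "((\<lambda>s. G s (c *\<^sub>R x)) \<longlongrightarrow> c *\<^sub>R D x) F" by (rule Lim_transform_eventually)
  then show "D (c *\<^sub>R x) = c *\<^sub>R D x" using tendsto_unique[OF F lim] by blast
qed

lemma tvs_tendsto_seminorm_diff: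
  fixes g :: "'i \<Rightarrow> 'f::{real_vector,t2_space}"
  assumes Tf: "tvs_space TYPE('f)" and p: "seminorm p" "continuous_on UNIV p"
    and lim: "(g \<longlongrightarrow> l) F" and \<epsilon>: "\<epsilon> > 0"
  shows "eventually (\<lambda>s. p (g s - l) < \<epsilon>) F"
proof -
  have "((\<lambda>s. g s + - l) \<longlongrightarrow> l + - l) F" by (rule tvs_tendsto_add[OF Tf lim tendsto_const])
  moreover have "isCont p 0" using p(2) by (simp add: continuous_on_eq_continuous_at)
  ultimately have "((\<lambda>s. p (g s - l)) \<longlongrightarrow> p 0) F" using isCont_tendsto_compose by force
  then show ?thesis using seminorm_zero[OF p(1)] \<epsilon> by (auto dest: order_tendstoD)
qed

lemma convex_seminorm_linear_sublevel:
  assumes p: "seminorm p" and L: "linear L"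
  shows "convex {e. p (L e) \<le> 1}"
proof (intro convexI, unfold mem_Collect_eq)
  fix x y and u v :: real assume xy: "p (L x) \<le> 1" "p (L y) \<le> 1"
    and uv: "0 \<le> u" "0 \<le> v" "u + v = 1"
  have "p (L (u *\<^sub>R x + v *\<^sub>R y)) = p (u *\<^sub>R L x + v *\<^sub>R L y)"
    by (simp add: linear_add[OF L] linear_scale[OF L])
  also have "\<dots> \<le> u * p (L x) + v * p (L y)"
    using seminorm_add[OF p] seminorm_scaleR[OF p] uv by (metis abs_of_nonneg)
  also have "\<dots> \<le> u * 1 + v * 1" using xy uv by (intro add_mono mult_left_mono) auto
  finally show "p (L (u *\<^sub>R x + v *\<^sub>R y)) \<le> 1" using uv by simp
qed

lemma seminorm_polar_barrel:
  fixes G :: "'i \<Rightarrow> 'e::{real_vector,topological_space} \<Rightarrow> 'f::{real_vector,topological_space}"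
  assumes p: "seminorm p" "continuous_on UNIV p" and G: "\<And>i. i \<in> I \<Longrightarrow> cont_linear (G i)"
    and pointwise: "\<And>e. \<exists>K. \<forall>i\<in>I. p (G i e) \<le> K"
  shows "tvs_barrel (\<Inter>i\<in>I. {e. p (G i e) \<le> 1})"
  unfolding tvs_barrel_def
proof (intro conjI)
  have lin: "linear (G i)" if "i \<in> I" for i using G[OF that] unfolding cont_linear_def by blast
  have hom: "p (G i (c *\<^sub>R e)) = \<bar>c\<bar> * p (G i e)" if "i \<in> I" for i c e
    using linear_scale[OF lin[OF that]] seminorm_scaleR[OF p(1)] by simp
  show "closed (\<Inter>i\<in>I. {e. p (G i e) \<le> 1})"
  proof (intro closed_INT ballI)
    fix i assume "i \<in> I"
    then have "continuous_on UNIV (\<lambda>e. p (G i e))"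
      using G p(2) unfolding cont_linear_def by (metis continuous_on_compose2 subset_UNIV)
    then show "closed {e. p (G i e) \<le> 1}" by (intro closed_Collect_le continuous_on_const)
  qed
  show "convex (\<Inter>i\<in>I. {e. p (G i e) \<le> 1})"
    by (intro convex_INT convex_seminorm_linear_sublevel[OF p(1) lin])
  show "tvs_balanced (\<Inter>i\<in>I. {e. p (G i e) \<le> 1})"
    unfolding tvs_balanced_def using hom seminorm_nonneg[OF p(1)] by (auto intro: mult_le_one)
  show "tvs_absorbing (\<Inter>i\<in>I. {e. p (G i e) \<le> 1})"
    unfolding tvs_absorbing_def
  proof
    fix e
    obtain K where K: "\<forall>i\<in>I. p (G i e) \<le> K" using pointwise by blast
    have "p (G i (c *\<^sub>R e)) \<le> 1" if "i \<in> I" "\<bar>c\<bar> \<le> 1 / (\<bar>K\<bar> + 1)" for i c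
    proof -
      have "p (G i e) \<le> \<bar>K\<bar> + 1" using K that(1) by fastforce
      then have "\<bar>c\<bar> * p (G i e) \<le> 1 / (\<bar>K\<bar> + 1) * (\<bar>K\<bar> + 1)"
        using that(2) seminorm_nonneg[OF p(1)] by (intro mult_mono) auto
      moreover have "\<bar>K\<bar> + 1 \<noteq> 0" using abs_ge_zero[of K] by linarith
      ultimately show ?thesis unfolding hom[OF that(1)] by simp
    qed
    then show "\<exists>r>0. \<forall>c. \<bar>c\<bar> \<le> r \<longrightarrow> c *\<^sub>R e \<in> (\<Inter>i\<in>I. {e. p (G i e) \<le> 1})"
      by (intro exI[of _ "1 / (\<bar>K\<bar> + 1)"]) auto
  qed
qed

theorem barrelled_uniform_boundedness:
  fixes G :: "'i \<Rightarrow> 'e::{real_vector,t2_space} \<Rightarrow> 'f::{real_vector,t2_space}"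
  assumes Te: "tvs_space TYPE('e)" and LCe: "locally_convex_space TYPE('e)"
    and Be: "barrelled_space TYPE('e)" and Tf: "tvs_space TYPE('f)"
    and LCf: "locally_convex_space TYPE('f)"
    and G: "\<And>i. i \<in> I \<Longrightarrow> cont_linear (G i)" and bounded: "\<And>e. tvs_bounded {G i e | i. i \<in> I}"
    and p: "seminorm p" "continuous_on UNIV p"
  obtains r where "seminorm r" "continuous_on UNIV r" "\<And>i e. i \<in> I \<Longrightarrow> p (G i e) \<le> r e"
proof -
  let ?W = "\<Inter>i\<in>I. {e. p (G i e) \<le> 1}"
  have pointwise: "\<exists>K. \<forall>i\<in>I. p (G i e) \<le> K" for e
    using bounded[of e] p unfolding tvs_bounded_iff_seminorm_bounded[OF Tf LCf] by blast
  have "tvs_barrel ?W" by (rule seminorm_polar_barrel[OF p G pointwise])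
  then have "0 \<in> interior ?W" using Be unfolding barrelled_space_def by blast
  then obtain V where V: "open V" "0 \<in> V" "V \<subseteq> ?W" by (meson interiorE)
  obtain r where r: "seminorm r" "continuous_on UNIV r" "{x. r x < 1} \<subseteq> V"
    using continuous_seminorm_in_nhds[OF Te LCe V(1,2)] .
  have "p (G i e) \<le> r e" if i: "i \<in> I" for i e
  proof (rule seminorm_le_if_unit_ball[OF r(1)])
    show "p (G i (c *\<^sub>R x)) = \<bar>c\<bar> * p (G i x)" for c x
      using G[OF i] seminorm_scaleR[OF p(1)] unfolding cont_linear_def by (simp add: linear_scale)
    show "p (G i x) \<le> 1" if "r x < 1" for x using that r(3) V(3) i by blast
  qed
  then show ?thesis using that r(1,2) by blast
qed

lemma cont_linear_if_seminorm_dominated: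
  fixes D :: "'e::{real_vector,t2_space} \<Rightarrow> 'f::{real_vector,t2_space}"
  assumes Te: "tvs_space TYPE('e)" and Tf: "tvs_space TYPE('f)" and LCf: "locally_convex_space TYPE('f)"
    and lin: "linear D"
    and dominated: "\<And>p. seminorm p \<Longrightarrow> continuous_on UNIV p \<Longrightarrow>
      \<exists>r. seminorm r \<and> continuous_on UNIV r \<and> (\<forall>e. p (D e) \<le> r e)"
  shows "cont_linear D"
  unfolding cont_linear_def
proof (intro conjI lin tvs_continuous_on_linear_if_continuous_at_0[OF Te Tf lin])
  fix V :: "'f set" assume "open V" "0 \<in> V"
  then obtain p where p: "seminorm p" "continuous_on UNIV p" "{y. p y < 1} \<subseteq> V"
    using continuous_seminorm_in_nhds[OF Tf LCf] by blast
  then obtain r where r: "seminorm r" "continuous_on UNIV r" "\<And>e. p (D e) \<le> r e"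
    using dominated by blast
  have "open {e. r e < 1}" using tvs_open_seminorm_ball[OF Te r(2), of 0] by simp
  moreover have "0 \<in> {e. r e < 1}" using seminorm_zero[OF r(1)] by simp
  moreover have "D e \<in> V" if "r e < 1" for e using that r(3)[of e] p(3) by fastforce
  ultimately show "\<exists>U. open U \<and> 0 \<in> U \<and> (\<forall>e\<in>U. D e \<in> V)" by blast
qed

lemma equicontinuous_tendsto_uniformly_on_compact:
  fixes G :: "'i \<Rightarrow> 'e::{real_vector,t2_space} \<Rightarrow> 'f::{real_vector,t2_space}"
  assumes Te: "tvs_space TYPE('e)" and Tf: "tvs_space TYPE('f)" and K: "compact K"
    and p: "seminorm p" "continuous_on UNIV p" and r: "seminorm r" "continuous_on UNIV r"
    and lin: "eventually (\<lambda>s. linear (G s)) F" "linear D"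
    and dominated: "eventually (\<lambda>s. \<forall>e. p (G s e) \<le> r e) F" "\<And>e. p (D e) \<le> r e"
    and lim: "\<And>e. ((\<lambda>s. G s e) \<longlongrightarrow> D e) F"
  shows "eventually (\<lambda>s. \<forall>e\<in>K. p (G s e - D e) < 1) F"
proof -
  \<comment> \<open>An \<open>\<epsilon>/3\<close> argument over a finite r-net of K.\<close>
  obtain T where T: "finite T" "K \<subseteq> (\<Union>k\<in>T. {e. r (e - k) < 1/4})"
  proof (rule compactE_image[OF K, of K "\<lambda>k. {e. r (e - k) < 1/4}"])
    show "open {e. r (e - k) < 1/4}" for k by (rule tvs_open_seminorm_ball[OF Te r(2)])
    show "K \<subseteq> (\<Union>k\<in>K. {e. r (e - k) < 1/4})" using seminorm_zero[OF r(1)] by auto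
  qed blast
  have "eventually (\<lambda>s. \<forall>k\<in>T. p (G s k - D k) < 1/4) F"
    by (intro eventually_ball_finite[OF T(1)] ballI tvs_tendsto_seminorm_diff[OF Tf p lim]) simp
  then show ?thesis using lin(1) dominated(1)
  proof eventually_elim
    case (elim s)
    show "\<forall>e\<in>K. p (G s e - D e) < 1"
    proof
      fix e assume "e \<in> K"
      then obtain k where k: "k \<in> T" "r (e - k) < 1/4" using T(2) by blast
      have "G s e - D e = ((G s k - D k) + G s (e - k)) + - D (e - k)"
        using elim(2) lin(2) by (simp add: linear_diff)
      then have "p (G s e - D e) \<le> p ((G s k - D k) + G s (e - k)) + p (- D (e - k))"
        by (simp only: seminorm_add[OF p(1)])
      also have "\<dots> \<le> p (G s k - D k) + p (G s (e - k)) + p (D (e - k))"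
        using seminorm_add[OF p(1)] seminorm_minus[OF p(1)] by simp
      also have "\<dots> < 1/4 + 1/4 + 1/4"
        using elim(1) k elim(3)[rule_format, of "e - k"] dominated(2)[of "e - k"] by fastforce
      finally show "p (G s e - D e) < 1" by simp
    qed
  qed
qed

lemma montel_Lb_tendsto_if_equicontinuous:
  fixes G :: "'i \<Rightarrow> 'e::{real_vector,t2_space} \<Rightarrow> 'f::{real_vector,t2_space}"
  assumes Me: "montel_space TYPE('e)" and Tf: "tvs_space TYPE('f)" and LCf: "locally_convex_space TYPE('f)"
    and lin: "eventually (\<lambda>s. linear (G s)) F" "linear D"
    and lim: "\<And>e. ((\<lambda>s. G s e) \<longlongrightarrow> D e) F"
    and equicontinuous: "\<And>p. seminorm p \<Longrightarrow> continuous_on UNIV p \<Longrightarrow> \<exists>r. seminorm r \<and> continuous_on UNIV r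
      \<and> eventually (\<lambda>s. \<forall>e. p (G s e) \<le> r e) F \<and> (\<forall>e. p (D e) \<le> r e)"
  shows "Lb_tendsto G D F"
  unfolding Lb_tendsto_def
proof (intro allI impI)
  fix B :: "'e set" and U :: "'f set" assume B: "tvs_bounded B" and "open U \<and> 0 \<in> U"
  then obtain p where p: "seminorm p" "continuous_on UNIV p" "{y. p y < 1} \<subseteq> U"
    using continuous_seminorm_in_nhds[OF Tf LCf] by blast
  then obtain r where r: "seminorm r" "continuous_on UNIV r"
    and dominated: "eventually (\<lambda>s. \<forall>e. p (G s e) \<le> r e) F" "\<And>e. p (D e) \<le> r e"
    using equicontinuous by blast
  have Te: "tvs_space TYPE('e)" and LCe: "locally_convex_space TYPE('e)"
    and closed_bounded: "\<And>B::'e set. tvs_bounded B \<Longrightarrow> closed B \<Longrightarrow> compact B"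
    using Me unfolding montel_space_def by auto
  have "compact (closure B)" by (intro closed_bounded tvs_bounded_closure[OF Te LCe B]) simp
  then have "eventually (\<lambda>s. \<forall>e\<in>closure B. p (G s e - D e) < 1) F"
    by (rule equicontinuous_tendsto_uniformly_on_compact[OF Te Tf _ p(1,2) r lin dominated lim])
  then show "eventually (\<lambda>s. \<forall>e\<in>B. G s e - D e \<in> U) F"
    by (rule eventually_mono) (use p(3) closure_subset in blast)
qed

lemma Lb_continuous_on_imp_continuous_on_apply:
  fixes Q :: "real \<Rightarrow> 'e::{real_vector,t2_space} \<Rightarrow> 'f::{real_vector,t2_space}"
  assumes Te: "tvs_space TYPE('e)" and LCe: "locally_convex_space TYPE('e)"
    and Tf: "tvs_space TYPE('f)" and Q: "Lb_continuous_on S Q"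
  shows "continuous_on S (\<lambda>t. Q t e)"
  using Q Lb_tendsto_imp_tendsto_apply[OF Te LCe Tf] unfolding continuous_on_def Lb_continuous_on_def
  by blast

lemma tvs_cont_linear_difference_quotient:
  fixes L M :: "'e::{real_vector,topological_space} \<Rightarrow> 'f::{real_vector,topological_space}"
  assumes Tf: "tvs_space TYPE('f)" and L: "cont_linear L" and M: "cont_linear M"
  shows "cont_linear (\<lambda>e. c *\<^sub>R (L e - M e))"
  unfolding cont_linear_def
proof
  have "linear L" "linear M" using L M unfolding cont_linear_def by auto
  then show "linear (\<lambda>e. c *\<^sub>R (L e - M e))"
    by (intro linearI) (simp_all add: linear_add linear_scale algebra_simps)
  show "continuous_on UNIV (\<lambda>e. c *\<^sub>R (L e - M e))"
    using L M unfolding cont_linear_def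
    by (intro tvs_continuous_on_scaleR[OF Tf continuous_on_const] tvs_continuous_on_diff[OF Tf]) auto
qed

theorem montel_weakly_differentiable_imp_Lb_differentiable:
  fixes Q :: "real \<Rightarrow> 'e::{real_vector,t2_space} \<Rightarrow> 'f::{real_vector,t2_space}"
  assumes Mf: "montel_space TYPE('f)" and Me: "montel_space TYPE('e)"
    and S: "compact S" "t0 \<in> S" "at t0 within S \<noteq> bot" and Q: "Lb_continuous_on S Q"
    and der: "\<And>e f. cont_linear f \<Longrightarrow> \<exists>d. ((\<lambda>t. f (Q t e)) has_real_derivative d) (at t0 within S)"
  obtains D where "cont_linear D"
    and "Lb_tendsto (\<lambda>t e. (1 / (t - t0)) *\<^sub>R (Q t e - Q t0 e)) D (at t0 within S)"
    and "\<And>e f. cont_linear f \<Longrightarrow> ((\<lambda>t. f (Q t e)) has_real_derivative f (D e)) (at t0 within S)"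
proof -
  have Tf: "tvs_space TYPE('f)" and LCf: "locally_convex_space TYPE('f)"
    and Te: "tvs_space TYPE('e)" and LCe: "locally_convex_space TYPE('e)"
    and Be: "barrelled_space TYPE('e)"
    using Mf Me unfolding montel_space_def by auto
  define q where "q t e = (1 / (t - t0)) *\<^sub>R (Q t e - Q t0 e)" for t e
  have cont: "continuous_on S (\<lambda>t. Q t e)" for e
    by (rule Lb_continuous_on_imp_continuous_on_apply[OF Te LCe Tf Q])
  have q: "cont_linear (q t)" if "t \<in> S - {t0}" for t
    using Q S(2) that unfolding q_def Lb_continuous_on_def
    by (intro tvs_cont_linear_difference_quotient[OF Tf]) auto
  have near: "eventually (\<lambda>t. t \<in> S - {t0}) (at t0 within S)"
    unfolding eventually_at_filter by (rule always_eventually) auto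
  have "\<exists>D. ((\<lambda>t. q t e) \<longlongrightarrow> D) (at t0 within S) \<and>
      (\<forall>f. cont_linear f \<longrightarrow> ((\<lambda>t. f (Q t e)) has_real_derivative f D) (at t0 within S))" for e
    using montel_weakly_differentiable_imp_differentiable[OF Mf S cont der[of _ e]] unfolding q_def by blast
  then obtain D where lim: "\<And>e. ((\<lambda>t. q t e) \<longlongrightarrow> D e) (at t0 within S)"
    and D: "\<And>e f. cont_linear f \<Longrightarrow> ((\<lambda>t. f (Q t e)) has_real_derivative f (D e)) (at t0 within S)"
    by metis
  have lin: "eventually (\<lambda>t. linear (q t)) (at t0 within S)"
    using near by (rule eventually_mono) (use q cont_linear_def in blast)
  then have "linear D" by (rule tvs_linear_pointwise_limit[OF Tf S(3) _ lim])
  have equicontinuous: "\<exists>r. seminorm r \<and> continuous_on UNIV r \<and>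
      eventually (\<lambda>t. \<forall>e. p (q t e) \<le> r e) (at t0 within S) \<and> (\<forall>e. p (D e) \<le> r e)"
    if p: "seminorm p" "continuous_on UNIV p" for p
  proof -
    have bounded: "tvs_bounded {q t e | t. t \<in> S - {t0}}" for e
      using weakly_differentiable_imp_difference_quotients_bounded[OF Tf LCf S(1,2) cont der]
      unfolding q_def by simp
    obtain r where r: "seminorm r" "continuous_on UNIV r" "\<And>t e. t \<in> S - {t0} \<Longrightarrow> p (q t e) \<le> r e"
      using barrelled_uniform_boundedness[OF Te LCe Be Tf LCf q bounded p] by blast
    have ev: "eventually (\<lambda>t. \<forall>e. p (q t e) \<le> r e) (at t0 within S)"
      using near by (rule eventually_mono) (use r(3) in blast)
    have "p (D e) \<le> r e" for e
    proof (rule tendsto_upperbound[OF _ _ S(3)])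
      show "((\<lambda>t. p (q t e)) \<longlongrightarrow> p (D e)) (at t0 within S)"
        using p(2) by (intro isCont_tendsto_compose[OF _ lim]) (simp add: continuous_on_eq_continuous_at)
      show "eventually (\<lambda>t. p (q t e) \<le> r e) (at t0 within S)" using ev by (rule eventually_mono) blast
    qed
    then show ?thesis using r(1,2) ev by blast
  qed
  have "cont_linear D"
    using equicontinuous by (intro cont_linear_if_seminorm_dominated[OF Te Tf LCf \<open>linear D\<close>]) blast
  moreover have "Lb_tendsto q D (at t0 within S)"
    by (rule montel_Lb_tendsto_if_equicontinuous[OF Me Tf LCf lin \<open>linear D\<close> lim equicontinuous])
  ultimately show ?thesis using that D unfolding q_def by blast
qed

lemma interval_at_within_nontrivial:
  fixes t0 \<epsilon> :: real
  assumes "\<epsilon> > 0" and "S \<in> {{t0..t0+\<epsilon>}, {t0-\<epsilon>..t0}, {t0-\<epsilon>..t0+\<epsilon>}}"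
  shows "compact S" "t0 \<in> S" "at t0 within S \<noteq> bot"
proof -
  consider "S = {t0..t0+\<epsilon>}" | "S = {t0-\<epsilon>..t0}" | "S = {t0-\<epsilon>..t0+\<epsilon>}" using assms(2) by blast
  then have "compact S \<and> t0 \<in> S \<and> at t0 within S \<noteq> bot"
  proof cases
    case 1
    then have "at t0 within S = at_right t0" using assms(1) by (simp add: at_within_Icc_at_right)
    then show ?thesis using 1 assms(1) by (simp add: trivial_limit_at_right_real)
  next
    case 2
    then have "at t0 within S = at_left t0" using assms(1) by (simp add: at_within_Icc_at_left)
    then show ?thesis using 2 assms(1) by (simp add: trivial_limit_at_left_real)
  next
    case 3
    then have "at t0 within S = at t0" using assms(1) by (simp add: at_within_Icc_at)
    then show ?thesis using 3 assms(1) by simp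
  qed
  then show "compact S" "t0 \<in> S" "at t0 within S \<noteq> bot" by auto
qed

theorem lemma7p13:
  fixes t0 \<epsilon> :: real
    and S :: "real set"
  assumes montelF: "montel_space TYPE('f::{real_vector,t2_space})"
    and eps: "\<epsilon> > 0"
    and S: "S \<in> {{t0..t0+\<epsilon>}, {t0-\<epsilon>..t0}, {t0-\<epsilon>..t0+\<epsilon>}}"
  shows
    "(\<forall>F :: real \<Rightarrow> 'f.
        continuous_on S F \<and>
        (\<forall>f'::'f \<Rightarrow> real. cont_linear f' \<longrightarrow>
           (\<exists>d. ((\<lambda>t. f' (F t)) has_real_derivative d) (at t0 within S)))
      \<longrightarrow>
        (\<exists>D::'f.
           ((\<lambda>t. (1 / (t - t0)) *\<^sub>R (F t - F t0)) \<longlongrightarrow> D) (at t0 within S) \<and>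
           (\<forall>f'::'f \<Rightarrow> real. cont_linear f' \<longrightarrow>
              ((\<lambda>t. f' (F t)) has_real_derivative f' D) (at t0 within S))))
     \<and>
     (montel_space TYPE('e::{real_vector,t2_space}) \<longrightarrow>
      (\<forall>Q :: real \<Rightarrow> 'e \<Rightarrow> 'f.
        Lb_continuous_on S Q \<and>
        (\<forall>e. \<forall>f'::'f \<Rightarrow> real. cont_linear f' \<longrightarrow>
           (\<exists>d. ((\<lambda>t. f' (Q t e)) has_real_derivative d) (at t0 within S)))
      \<longrightarrow>
        (\<exists>D::'e \<Rightarrow> 'f. cont_linear D \<and>
           Lb_tendsto (\<lambda>t e. (1 / (t - t0)) *\<^sub>R (Q t e - Q t0 e)) D (at t0 within S) \<and>
           (\<forall>e. \<forall>f'::'f \<Rightarrow> real. cont_linear f' \<longrightarrow>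
              ((\<lambda>t. f' (Q t e)) has_real_derivative f' (D e)) (at t0 within S)))))"
proof -
  note S' = interval_at_within_nontrivial[OF eps S]
  show ?thesis
  proof (intro conjI allI impI; elim conjE)
    fix F :: "real \<Rightarrow> 'f"
    assume "continuous_on S F"
      and "\<forall>f'::'f \<Rightarrow> real. cont_linear f' \<longrightarrow> (\<exists>d. ((\<lambda>t. f' (F t)) has_real_derivative d) (at t0 within S))"
    from montel_weakly_differentiable_imp_differentiable[OF montelF S' this(1) this(2)[rule_format]]
    show "\<exists>D. ((\<lambda>t. (1 / (t - t0)) *\<^sub>R (F t - F t0)) \<longlongrightarrow> D) (at t0 within S) \<and>
           (\<forall>f'. cont_linear f' \<longrightarrow> ((\<lambda>t. f' (F t)) has_real_derivative f' D) (at t0 within S))"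
      by blast
  next
    fix Q :: "real \<Rightarrow> 'e \<Rightarrow> 'f"
    assume "montel_space TYPE('e)" and "Lb_continuous_on S Q"
      and "\<forall>e. \<forall>f'::'f \<Rightarrow> real. cont_linear f' \<longrightarrow>
        (\<exists>d. ((\<lambda>t. f' (Q t e)) has_real_derivative d) (at t0 within S))"
    from montel_weakly_differentiable_imp_Lb_differentiable[OF montelF this(1) S' this(2) this(3)[rule_format]]
    show "\<exists>D. cont_linear D \<and> Lb_tendsto (\<lambda>t e. (1 / (t - t0)) *\<^sub>R (Q t e - Q t0 e)) D (at t0 within S) \<and>
           (\<forall>e f'. cont_linear f' \<longrightarrow> ((\<lambda>t. f' (Q t e)) has_real_derivative f' (D e)) (at t0 within S))"
      by blast
  qed
qed

end
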